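(* Let $S$ be a finite set, $N\ge1$, $\mathcal X=S^N$, $\mu$ the uniform measure on $\mathcal X$, and let $P$ be a coordinate-replacement kernel on $\mathcal X$ (defined in the context) which is reversible with respect to $\mu$. Let $\Omega\subseteq\mathcal X$ with $\mu(\Omega)>0$ be invariant under $P$, let $\pi=\mu(\cdot\mid\Omega)$, and let $G\subseteq\Omega$ with $\pi(G)>0$. Let $(X_t)_{t\ge0}$ denote the discrete-time chain with kernel $P$ and $\mathbb P_x$ its law started at $x$. Suppose: (i) there is $A<\infty$ such that every nonnegative $F:\mathcal X\to\mathbb R$ with $\operatorname{supp}(F)\subseteq G$ satisfies $\operatorname{Ent}_\mu(F^2)\le A\,\mathcal E_P^\mu(F,F)$; (ii) there are $t_*\ge0$, an integer $L\ge1$ and $\eta\ge0$ such that, uniformly in $x\in\Omega$ and all integers $s\ge t_*$, $\mathbb P_x(\exists\,u\in\{0,1,\dots,L\}:X_{s+u}\notin G)\le\eta$. Set $t_{\mathrm{conf}}=2A\log(e+\log|\Omega|)$, $\zeta=\mathbb P(\operatorname{Poi}(t_{\mathrm{conf}})>L)$ and $R=e^{-t_{\mathrm{conf}}/A}\log|\Omega|+A\,\pi(G^c)/\pi(G)$, where $G^c=\Omega\setminus G$. Then for every $x\in\Omega$ and every integer $s\ge t_*$, \[ \left\|\delta_xP^s e^{t_{\mathrm{conf}}(P-I)}-\pi\right\|_{\mathrm{TV}}\le 2(\eta+\zeta)+\sqrt{R/2}+\pi(G^c). \] Consequently, if $2(\eta+\zeta)+\sqrt{R/2}+\pi(G^c)+\mathbb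 P(\operatorname{Poi}(2t_* )<t_* )\le\frac14$, then the continuous-time chain satisfies $t^{\mathrm{cont}}_{\mathrm{mix}}(1/4)\le 2t_*+t_{\mathrm{conf}}$.
   Context: For $x\in S^N$, $i\in[N]$, $u\in S$, $x^{i,u}$ denotes $x$ with coordinate $i$ replaced by $u$, and $x_{-i}=(x_1,\dots,x_{i-1},x_{i+1},\dots,x_N)$. A coordinate-replacement kernel is a Markov kernel of the form $Pf(x)=\frac1N\sum_{i=1}^N\sum_{u\in S}K_i(x_{-i};x_i,u)f(x^{i,u})$, where for every $i$ and $x_{-i}$, $K_i(x_{-i})$ is a Markov kernel on $S$ reversible with respect to the uniform measure on $S$. $\Omega$ invariant means $P(x,y)=0$ for $x\in\Omega$, $y\notin\Omega$; then $P$ restricted to $\Omega$ is reversible w.r.t. $\pi$. $\operatorname{Ent}_\rho(f^2)=\rho(f^2\log f^2)-\rho(f^2)\log\rho(f^2)$ and $\mathcal E^\rho_K(f,f)=\frac12\sum_{x,y}\rho(x)K(x,y)(f(x)-f(y))^2$. $\operatorname{Poi}(t)$ is a Poisson variable of mean $t$. $e^{t(P-I)}$ is the continuous-time semigroup on $\Omega$, and $t^{\mathrm{cont}}_{\mathrm{mix}}(1/4)=\inf\{t\ge0:\max_{x\in\Omega}\|\delta_xe^{t(P-I)}-\pi\|_{\mathrm{TV}}\le1/4\}$. *)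

theory Defs
  imports "HOL-Analysis.Analysis"
begin

text \<open>Configurations: x :: 'n \<Rightarrow> 'a, with S = UNIV::'a (finite) and N = CARD('n).
  Kernels on a finite type are functions 'x \<Rightarrow> 'x \<Rightarrow> real.\<close>

definition cr_kernel :: "('n::finite \<Rightarrow> ('n \<Rightarrow> 'a::finite) \<Rightarrow> 'a \<Rightarrow> 'a \<Rightarrow> real)
    \<Rightarrow> ('n \<Rightarrow> 'a) \<Rightarrow> ('n \<Rightarrow> 'a) \<Rightarrow> real" where
  "cr_kernel K x y = (1 / real CARD('n)) *
     (\<Sum>i\<in>UNIV. \<Sum>u\<in>UNIV. K i x (x i) u * (if y = x(i := u) then 1 else 0))"

text \<open>K i x depends only on x_{-i}; each K i x is a Markov kernel on S reversible
  w.r.t. the uniform measure (i.e. symmetric).\<close>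
definition cr_data :: "('n::finite \<Rightarrow> ('n \<Rightarrow> 'a::finite) \<Rightarrow> 'a \<Rightarrow> 'a \<Rightarrow> real) \<Rightarrow> bool" where
  "cr_data K \<longleftrightarrow>
     (\<forall>i x v. K i (x(i := v)) = K i x) \<and>
     (\<forall>i x a b. K i x a b \<ge> 0) \<and>
     (\<forall>i x a. (\<Sum>b\<in>UNIV. K i x a b) = 1) \<and>
     (\<forall>i x a b. K i x a b = K i x b a)"

fun mpow :: "('x::finite \<Rightarrow> 'x \<Rightarrow> real) \<Rightarrow> nat \<Rightarrow> 'x \<Rightarrow> 'x \<Rightarrow> real" where
  "mpow P 0 x y = (if x = y then 1 else 0)"
| "mpow P (Suc n) x y = (\<Sum>z\<in>UNIV. mpow P n x z * P z y)"

text \<open>Continuous-time semigroup e^{t(P-I)} = \<Sum>_k e^{-t} t^k/k! P^k.\<close>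
definition heat :: "('x::finite \<Rightarrow> 'x \<Rightarrow> real) \<Rightarrow> real \<Rightarrow> 'x \<Rightarrow> 'x \<Rightarrow> real" where
  "heat P t x y = (\<Sum>k. exp (- t) * t ^ k / fact k * mpow P k x y)"

text \<open>Probability, for the chain started at y, that X_0,...,X_n all lie in G.\<close>
fun stay_in :: "('x::finite \<Rightarrow> 'x \<Rightarrow> real) \<Rightarrow> 'x set \<Rightarrow> nat \<Rightarrow> 'x \<Rightarrow> real" where
  "stay_in P G 0 y = (if y \<in> G then 1 else 0)"
| "stay_in P G (Suc n) y = (if y \<in> G then (\<Sum>z\<in>UNIV. P y z * stay_in P G n z) else 0)"

text \<open>P_x(\<exists>u\<in>{0..L}. X_{s+u} \<notin> G).\<close>
definition exit_prob :: "('x::finite \<Rightarrow> 'x \<Rightarrow> real) \<Rightarrow> 'x set \<Rightarrow> 'x \<Rightarrow> nat \<Rightarrow> nat \<Rightarrow> real" where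
  "exit_prob P G x s L = 1 - (\<Sum>y\<in>UNIV. mpow P s x y * stay_in P G L y)"

definition unif_mean :: "('x::finite \<Rightarrow> real) \<Rightarrow> real" where
  "unif_mean f = (\<Sum>x\<in>UNIV. f x) / real CARD('x)"

definition Ent_unif :: "('x::finite \<Rightarrow> real) \<Rightarrow> real" where
  "Ent_unif g = unif_mean (\<lambda>x. g x * ln (g x)) - unif_mean g * ln (unif_mean g)"

definition dirichlet_unif :: "('x::finite \<Rightarrow> 'x \<Rightarrow> real) \<Rightarrow> ('x \<Rightarrow> real) \<Rightarrow> real" where
  "dirichlet_unif P f = (1/2) * (\<Sum>x\<in>UNIV. \<Sum>y\<in>UNIV. (1 / real CARD('x)) * P x y * (f x - f y)^2)"

definition cond_unif :: "'x set \<Rightarrow> 'x \<Rightarrow> real" where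
  "cond_unif \<Omega> y = (if y \<in> \<Omega> then 1 / real (card \<Omega>) else 0)"

definition tv_dist :: "('x::finite \<Rightarrow> real) \<Rightarrow> ('x \<Rightarrow> real) \<Rightarrow> real" where
  "tv_dist \<nu> \<rho> = (1/2) * (\<Sum>y\<in>UNIV. \<bar>\<nu> y - \<rho> y\<bar>)"

definition poi_pmf :: "real \<Rightarrow> nat \<Rightarrow> real" where
  "poi_pmf t k = exp (- t) * t ^ k / fact k"

definition poi_gt :: "real \<Rightarrow> nat \<Rightarrow> real" where
  "poi_gt t L = (\<Sum>k. if k > L then poi_pmf t k else 0)"

definition poi_lt :: "real \<Rightarrow> real \<Rightarrow> real" where
  "poi_lt t c = (\<Sum>k. if real k < c then poi_pmf t k else 0)"

definition tmix_cont :: "('x::finite \<Rightarrow> 'x \<Rightarrow> real) \<Rightarrow> 'x set \<Rightarrow> real" where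
  "tmix_cont P \<Omega> = Inf {t. t \<ge> 0 \<and> (\<forall>x\<in>\<Omega>. tv_dist (heat P t x) (cond_unif \<Omega>) \<le> 1/4)}"

end

(*
  Run the chain from \<delta>\<^sub>x P\<^sup>s for time t_conf and keep only the mass that has not left G:
  it evolves by the semigroup of P killed outside G. Along this killed flow the relative entropy
  of the surviving mass with respect to the uniform law on G has derivative at most
  -Ent/A + \<rho>\<cdot>mass, by the log-Sobolev inequality restricted to G; reversibility and the
  invariance of \<Omega> bound the entropy carried off by escaping mass through
  \<rho> = |\<Omega> - G| / |G|. Gronwall's lemma gives Ent \<le> e^(-t/A) log|\<Omega>| + A \<rho>. By (ii), and
  since Poi(t_conf) \<le> L except with probability \<zeta>, at least 1 - \<eta> - \<zeta> of the mass
  survives. Pinsker's inequality compares the normalised surviving mass with the uniform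
  law on G, which is \<pi>(G\<^sup>c)-close to \<pi>. For the mixing time, e^((2 tstar + t_conf)(P-I))
  is the Poi(2 tstar)-mixture of the P\<^sup>j e^(t_conf(P-I)), and TV distance is convex.
*)

theory Submission
  imports Defs
begin

section \<open>Poisson weights\<close>

lemma poi_pmf_nonneg: "0 \<le> t \<Longrightarrow> 0 \<le> poi_pmf t k"
  by (simp add: poi_pmf_def)

lemma sums_poi_pmf: "poi_pmf t sums 1"
proof -
  have "(\<lambda>k. exp (-t) * (t ^ k /\<^sub>R fact k)) sums (exp (-t) * exp t)"
    by (rule sums_mult[OF exp_converges])
  moreover have "(\<lambda>k. exp (-t) * (t ^ k /\<^sub>R fact k)) = poi_pmf t"
    by (auto simp: poi_pmf_def divide_inverse mult_ac)
  ultimately show ?thesis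
    by (simp add: exp_minus_inverse mult.commute)
qed

lemma summable_poi_pmf: "summable (poi_pmf t)"
  using sums_poi_pmf by (rule sums_summable)

lemma suminf_poi_pmf: "(\<Sum>k. poi_pmf t k) = 1"
  using sums_poi_pmf by (rule sums_unique[symmetric])

lemma summable_poi_pmf_mult:
  assumes "0 \<le> t" and "\<And>k. \<bar>c k\<bar> \<le> C"
  shows "summable (\<lambda>k. poi_pmf t k * c k)"
proof (rule summable_comparison_test)
  show "\<exists>N. \<forall>n\<ge>N. norm (poi_pmf t n * c n) \<le> poi_pmf t n * C"
    using assms poi_pmf_nonneg[OF assms(1)] by (auto simp: abs_mult intro!: mult_left_mono)
  show "summable (\<lambda>n. poi_pmf t n * C)"
    by (rule summable_mult2[OF summable_poi_pmf])
qed

lemma summable_poi_pmf_indicator: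
  "0 \<le> t \<Longrightarrow> summable (\<lambda>k. if Q k then poi_pmf t k else 0)"
  by (rule summable_comparison_test[OF _ summable_poi_pmf]) (auto simp: poi_pmf_nonneg)

lemma poi_pmf_convolution: "(\<Sum>i\<le>n. poi_pmf a i * poi_pmf b (n - i)) = poi_pmf (a + b) n"
proof -
  have "(\<Sum>i\<le>n. poi_pmf a i * poi_pmf b (n - i))
      = (\<Sum>i\<le>n. exp (-(a+b)) / fact n * (of_nat (n choose i) * a ^ i * b ^ (n - i)))"
    by (intro sum.cong refl) (simp add: poi_pmf_def binomial_fact exp_add[symmetric] field_simps)
  also have "\<dots> = exp (-(a+b)) / fact n * (a + b) ^ n"
    by (simp add: binomial_ring sum_distrib_left)
  finally show ?thesis by (simp add: poi_pmf_def)
qed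

lemma poi_gt_nonneg: "0 \<le> t \<Longrightarrow> 0 \<le> poi_gt t L"
  unfolding poi_gt_def by (intro suminf_nonneg summable_poi_pmf_indicator) (auto simp: poi_pmf_nonneg)

lemma suminf_poi_pmf_atMost:
  assumes "0 \<le> t"
  shows "(\<Sum>k. if k \<le> L then poi_pmf t k else 0) = 1 - poi_gt t L"
proof -
  have "(\<Sum>k. (if k \<le> L then poi_pmf t k else 0) + (if L < k then poi_pmf t k else 0))
      = (\<Sum>k. if k \<le> L then poi_pmf t k else 0) + poi_gt t L"
    unfolding poi_gt_def by (intro suminf_add[symmetric] summable_poi_pmf_indicator assms)
  moreover have "(\<lambda>k. (if k \<le> L then poi_pmf t k else 0) + (if L < k then poi_pmf t k else 0))
      = poi_pmf t"
    by auto
  ultimately show ?thesis using suminf_poi_pmf[of t] by simp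
qed

lemma poi_mixture_ge:
  assumes t: "0 \<le> t" and X: "\<And>k. 0 \<le> X k" "\<And>k. X k \<le> 1" and low: "\<And>k. k \<le> L \<Longrightarrow> a \<le> X k"
  shows "(1 - poi_gt t L) * a \<le> (\<Sum>k. poi_pmf t k * X k)"
proof -
  have "(\<Sum>k. (if k \<le> L then poi_pmf t k else 0) * a) \<le> (\<Sum>k. poi_pmf t k * X k)"
  proof (rule suminf_le)
    show "(if k \<le> L then poi_pmf t k else 0) * a \<le> poi_pmf t k * X k" for k
      using low[of k] X[of k] by (auto intro: mult_left_mono mult_nonneg_nonneg poi_pmf_nonneg[OF t])
    show "summable (\<lambda>k. (if k \<le> L then poi_pmf t k else 0) * a)"
      by (intro summable_mult2 summable_poi_pmf_indicator t)
    show "summable (\<lambda>k. poi_pmf t k * X k)"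
      by (rule summable_poi_pmf_mult[where C=1]) (use t X in auto)
  qed
  then show ?thesis
    by (simp add: suminf_mult2[OF summable_poi_pmf_indicator[OF t], symmetric]
        suminf_poi_pmf_atMost[OF t])
qed

lemma poi_mixture_le:
  assumes a: "0 \<le> a" and c: "\<And>j. 0 \<le> c j" "\<And>j. c j \<le> 1"
    and B: "\<And>j. t \<le> real j \<Longrightarrow> c j \<le> B" "0 \<le> B"
  shows "(\<Sum>j. poi_pmf a j * c j) \<le> B + poi_lt a t"
proof -
  have "(\<Sum>j. poi_pmf a j * c j) \<le> (\<Sum>j. poi_pmf a j * B + (if real j < t then poi_pmf a j else 0))"
  proof (rule suminf_le)
    fix j
    have "poi_pmf a j * c j \<le> poi_pmf a j" "0 \<le> poi_pmf a j * B"
      using c[of j] B(2) poi_pmf_nonneg[OF a, of j] by (simp_all add: mult_left_le)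
    moreover have "poi_pmf a j * c j \<le> poi_pmf a j * B" if "t \<le> real j"
      using B(1)[OF that] poi_pmf_nonneg[OF a, of j] by (rule mult_left_mono)
    ultimately show "poi_pmf a j * c j \<le> poi_pmf a j * B + (if real j < t then poi_pmf a j else 0)"
      by (cases "t \<le> real j") auto
  qed (use a c in \<open>auto intro!: summable_poi_pmf_mult[where C=1] summable_add summable_mult2
      summable_poi_pmf summable_poi_pmf_indicator\<close>)
  also have "\<dots> = B + poi_lt a t"
    by (simp add: poi_lt_def suminf_add[symmetric] summable_mult2 summable_poi_pmf
        summable_poi_pmf_indicator[OF a] suminf_mult2[OF summable_poi_pmf, symmetric] suminf_poi_pmf)
  finally show ?thesis .
qed

section \<open>Powers of kernels and the heat semigroup\<close>

lemma mpow_Suc_0 [simp]: "mpow P (Suc 0) x y = P x y"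
  by (simp add: of_bool_def[symmetric])

lemma mpow_add: "mpow P (j + k) x y = (\<Sum>z\<in>UNIV. mpow P j x z * mpow P k z y)"
proof (induction k arbitrary: y)
  case 0
  then show ?case by (simp add: of_bool_def[symmetric])
next
  case (Suc k)
  have "mpow P (j + Suc k) x y = (\<Sum>w\<in>UNIV. \<Sum>z\<in>UNIV. mpow P j x z * mpow P k z w * P w y)"
    by (simp add: Suc.IH sum_distrib_right)
  also have "\<dots> = (\<Sum>z\<in>UNIV. mpow P j x z * mpow P (Suc k) z y)"
    by (subst sum.swap) (simp add: sum_distrib_left mult.assoc)
  finally show ?case .
qed

lemma mpow_Suc_left: "mpow P (Suc n) x y = (\<Sum>z\<in>UNIV. P x z * mpow P n z y)"
  using mpow_add[of P "Suc 0" n x y] by (simp del: mpow.simps)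

lemma heat_eq_poi_pmf: "heat P t x y = (\<Sum>k. poi_pmf t k * mpow P k x y)"
  by (simp add: heat_def poi_pmf_def)

locale substochastic =
  fixes P :: "'x::finite \<Rightarrow> 'x \<Rightarrow> real"
  assumes nonneg: "\<And>x y. 0 \<le> P x y" and row_sum_le: "\<And>x. (\<Sum>y\<in>UNIV. P x y) \<le> 1"
begin

lemma mpow_nonneg: "0 \<le> mpow P n x y"
  by (induction n arbitrary: y) (auto intro!: sum_nonneg simp: nonneg)

lemma mpow_row_sum_le: "(\<Sum>y\<in>UNIV. mpow P n x y) \<le> 1"
proof (induction n)
  case (Suc n)
  have "(\<Sum>y\<in>UNIV. mpow P (Suc n) x y) = (\<Sum>z\<in>UNIV. mpow P n x z * (\<Sum>y\<in>UNIV. P z y))"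
    by (simp add: sum_distrib_left) (rule sum.swap)
  also have "\<dots> \<le> (\<Sum>z\<in>UNIV. mpow P n x z)"
    by (intro sum_mono) (simp add: mpow_nonneg row_sum_le mult_left_le)
  finally show ?case using Suc by simp
qed simp

lemma mpow_le_1: "mpow P n x y \<le> 1"
  using member_le_sum[of y UNIV "mpow P n x"] mpow_row_sum_le[of n x] by (simp add: mpow_nonneg)

lemma summable_heat: "0 \<le> t \<Longrightarrow> summable (\<lambda>k. poi_pmf t k * mpow P k x y)"
  by (rule summable_poi_pmf_mult[where C=1]) (auto simp: mpow_nonneg mpow_le_1)

lemma heat_nonneg: "0 \<le> t \<Longrightarrow> 0 \<le> heat P t x y"
  unfolding heat_eq_poi_pmf
  by (intro suminf_nonneg summable_heat) (auto simp: poi_pmf_nonneg mpow_nonneg)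

lemma heat_row_sum_eq:
  assumes "0 \<le> t"
  shows "(\<Sum>y\<in>B. heat P t x y) = (\<Sum>k. poi_pmf t k * (\<Sum>y\<in>B. mpow P k x y))"
  unfolding heat_eq_poi_pmf
  by (simp add: suminf_sum[symmetric] summable_heat[OF assms] sum_distrib_left)

lemma heat_row_sum_le: "0 \<le> t \<Longrightarrow> (\<Sum>y\<in>UNIV. heat P t x y) \<le> 1"
  unfolding heat_row_sum_eq
  using suminf_le[of "\<lambda>k. poi_pmf t k * (\<Sum>y\<in>UNIV. mpow P k x y)" "poi_pmf t"]
  by (simp add: mult_left_le mpow_row_sum_le poi_pmf_nonneg summable_poi_pmf suminf_poi_pmf
      summable_poi_pmf_mult[where C=1] abs_le_iff sum_nonneg mpow_nonneg)

lemma heat_diag_ge: "0 \<le> t \<Longrightarrow> exp (- t) \<le> heat P t x x"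
  unfolding heat_eq_poi_pmf
  using sum_le_suminf[OF summable_heat[of t x x], of "{0}"]
  by (simp add: poi_pmf_def mult_nonneg_nonneg mpow_nonneg)

lemma heat_0: "heat P 0 x y = (if x = y then 1 else 0)"
proof -
  have "(\<lambda>k. poi_pmf 0 k * mpow P k x y) = (\<lambda>k. if k = 0 then mpow P 0 x y else 0)"
    by (auto simp: poi_pmf_def)
  then show ?thesis
    using sums_single[of 0 "\<lambda>_. mpow P 0 x y"] by (simp add: heat_eq_poi_pmf sums_iff)
qed

lemma heat_eq_exp_series: "heat P t x y = exp (- t) * (\<Sum>k. mpow P k x y / fact k * t ^ k)"
  and summable_mpow_exp_series: "summable (\<lambda>k. mpow P k x y / fact k * t ^ k)"
proof -
  show sum: "summable (\<lambda>k. mpow P k x y / fact k * t ^ k)"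
  proof (rule summable_comparison_test)
    show "\<exists>N. \<forall>n\<ge>N. norm (mpow P n x y / fact n * t ^ n) \<le> inverse (fact n) * \<bar>t\<bar> ^ n"
      by (auto simp: abs_mult power_abs divide_inverse mpow_nonneg mpow_le_1 mult_left_le_one_le
          intro!: mult_right_mono)
  qed (rule summable_exp)
  show "heat P t x y = exp (- t) * (\<Sum>k. mpow P k x y / fact k * t ^ k)"
    unfolding heat_def by (subst suminf_mult[OF sum, symmetric]) (simp add: field_simps)
qed

lemma heat_has_derivative:
  "((\<lambda>t. heat P t x y) has_real_derivative (\<Sum>w\<in>UNIV. heat P t x w * P w y) - heat P t x y) (at t)"
proof -
  define S where "S w t = (\<Sum>k. mpow P k x w / fact k * t ^ k)" for w t
  have diffs: "diffs (\<lambda>k. mpow P k x y / fact k) k * t ^ k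
      = (\<Sum>w\<in>UNIV. mpow P k x w / fact k * t ^ k * P w y)" for k
  proof -
    have "diffs (\<lambda>k. mpow P k x y / fact k) k = mpow P (Suc k) x y / fact k"
      by (simp add: diffs_def fact_Suc del: of_nat_Suc mpow.simps)
    then show ?thesis
      by (simp add: sum_distrib_left sum_distrib_right sum_divide_distrib mult_ac)
  qed
  have "(S y has_real_derivative (\<Sum>k. diffs (\<lambda>k. mpow P k x y / fact k) k * t ^ k)) (at t)"
    unfolding S_def by (intro termdiffs_strong_converges_everywhere summable_mpow_exp_series)
  moreover have "(\<Sum>k. diffs (\<lambda>k. mpow P k x y / fact k) k * t ^ k) = (\<Sum>w\<in>UNIV. S w t * P w y)"
    unfolding diffs S_def
    by (subst suminf_sum) (intro summable_mult2 summable_mpow_exp_series sum.cong refl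
        suminf_mult2[symmetric])+
  ultimately have "((\<lambda>t. exp (- t) * S y t) has_real_derivative
      - exp (- t) * S y t + exp (- t) * (\<Sum>w\<in>UNIV. S w t * P w y)) (at t)"
    by (auto intro!: derivative_eq_intros)
  then show ?thesis
    by (simp add: heat_eq_exp_series S_def sum_distrib_left mult_ac)
qed

end

locale stochastic =
  fixes P :: "'x::finite \<Rightarrow> 'x \<Rightarrow> real"
  assumes nonneg: "\<And>x y. 0 \<le> P x y" and row_sum: "\<And>x. (\<Sum>y\<in>UNIV. P x y) = 1"
begin

sublocale substochastic
  by unfold_locales (simp_all add: nonneg row_sum)

lemma mpow_row_sum: "(\<Sum>y\<in>UNIV. mpow P n x y) = 1"
proof (induction n)
  case (Suc n)
  have "(\<Sum>y\<in>UNIV. mpow P (Suc n) x y) = (\<Sum>z\<in>UNIV. mpow P n x z * (\<Sum>y\<in>UNIV. P z y))"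
    by (simp add: sum_distrib_left) (rule sum.swap)
  then show ?case using Suc by (simp add: row_sum)
qed simp

lemma heat_row_sum: "0 \<le> t \<Longrightarrow> (\<Sum>y\<in>UNIV. heat P t x y) = 1"
  by (simp add: heat_row_sum_eq mpow_row_sum suminf_poi_pmf)

lemma mpow_heat_nonneg: "0 \<le> T \<Longrightarrow> 0 \<le> (\<Sum>z\<in>UNIV. mpow P s x z * heat P T z y)"
  by (intro sum_nonneg mult_nonneg_nonneg mpow_nonneg heat_nonneg)

lemma mpow_heat_row_sum: "0 \<le> T \<Longrightarrow> (\<Sum>y\<in>UNIV. \<Sum>z\<in>UNIV. mpow P s x z * heat P T z y) = 1"
  by (subst sum.swap) (simp add: heat_row_sum mpow_row_sum flip: sum_distrib_left)

lemma heat_add: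
  assumes a: "0 \<le> a" and b: "0 \<le> b"
  shows "heat P (a + b) x y = (\<Sum>z\<in>UNIV. heat P a x z * heat P b z y)"
proof -
  let ?c = "\<lambda>z n. \<Sum>i\<le>n. (poi_pmf a i * mpow P i x z) * (poi_pmf b (n - i) * mpow P (n - i) z y)"
  have abs_summable: "summable (\<lambda>k. norm (poi_pmf s k * mpow P k u v))" if "0 \<le> s" for s u v
    using summable_heat[OF that] that by (simp add: abs_mult poi_pmf_nonneg mpow_nonneg)
  have "(\<Sum>z\<in>UNIV. heat P a x z * heat P b z y) = (\<Sum>z\<in>UNIV. \<Sum>n. ?c z n)"
    unfolding heat_eq_poi_pmf using a b by (intro sum.cong refl Cauchy_product abs_summable)
  also have "\<dots> = (\<Sum>n. \<Sum>z\<in>UNIV. ?c z n)"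
    using a b by (intro suminf_sum[symmetric] summable_Cauchy_product abs_summable)
  also have "\<dots> = (\<Sum>n. poi_pmf (a + b) n * mpow P n x y)"
  proof (intro suminf_cong)
    fix n
    have "(\<Sum>z\<in>UNIV. ?c z n)
        = (\<Sum>i\<le>n. poi_pmf a i * poi_pmf b (n - i) * (\<Sum>z\<in>UNIV. mpow P i x z * mpow P (n - i) z y))"
      by (subst sum.swap) (simp add: sum_distrib_left mult_ac)
    then show "(\<Sum>z\<in>UNIV. ?c z n) = poi_pmf (a + b) n * mpow P n x y"
      by (simp add: mpow_add[symmetric] sum_distrib_right[symmetric] poi_pmf_convolution)
  qed
  finally show ?thesis by (simp add: heat_eq_poi_pmf)
qed

lemma heat_add_eq_poi_mixture:
  assumes a: "0 \<le> a" and T: "0 \<le> T"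
  shows "heat P (a + T) x y = (\<Sum>j. poi_pmf a j * (\<Sum>z\<in>UNIV. mpow P j x z * heat P T z y))"
proof -
  have "heat P (a + T) x y = (\<Sum>z\<in>UNIV. \<Sum>j. poi_pmf a j * mpow P j x z * heat P T z y)"
    unfolding heat_add[OF a T] heat_eq_poi_pmf[of P a]
    by (intro sum.cong refl suminf_mult2 summable_heat a)
  also have "\<dots> = (\<Sum>j. \<Sum>z\<in>UNIV. poi_pmf a j * mpow P j x z * heat P T z y)"
    by (intro suminf_sum[symmetric] summable_mult2 summable_heat a)
  finally show ?thesis
    by (simp add: sum_distrib_left mult.assoc)
qed

end

section \<open>The chain killed outside a set\<close>

lemma stay_in_outside: "w \<notin> G \<Longrightarrow> stay_in P G k w = 0"
  by (cases k) auto

definition killed_kernel :: "('x \<Rightarrow> 'x \<Rightarrow> real) \<Rightarrow> 'x set \<Rightarrow> 'x \<Rightarrow> 'x \<Rightarrow> real" where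
  "killed_kernel P G x y = (if x \<in> G \<and> y \<in> G then P x y else 0)"

context substochastic
begin

lemma stay_in_nonneg: "0 \<le> stay_in P G k w"
  by (induction k arbitrary: w) (auto intro!: sum_nonneg mult_nonneg_nonneg nonneg)

lemma stay_in_le_1: "stay_in P G k w \<le> 1"
proof (induction k arbitrary: w)
  case (Suc k)
  have "(\<Sum>z\<in>UNIV. P w z * stay_in P G k z) \<le> (\<Sum>z\<in>UNIV. P w z)"
    using Suc by (intro sum_mono) (simp add: nonneg mult_left_le)
  then show ?case using row_sum_le[of w] by simp
qed simp

lemma stay_in_Suc_le: "stay_in P G (Suc k) w \<le> stay_in P G k w"
proof (induction k arbitrary: w)
  case 0
  have "(\<Sum>z\<in>UNIV. P w z * stay_in P G 0 z) \<le> (\<Sum>z\<in>UNIV. P w z)"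
    by (intro sum_mono) (simp add: nonneg)
  then show ?case using row_sum_le[of w] by simp
next
  case (Suc k)
  then show ?case by (auto intro!: sum_mono mult_left_mono simp: nonneg)
qed

lemma stay_in_antimono: "k \<le> L \<Longrightarrow> stay_in P G L w \<le> stay_in P G k w"
  using lift_Suc_antimono_le[of "\<lambda>k. stay_in P G k w", OF stay_in_Suc_le] by simp

lemma substochastic_killed: "substochastic (killed_kernel P G)"
proof
  show "0 \<le> killed_kernel P G x y" for x y
    by (simp add: killed_kernel_def nonneg)
  show "(\<Sum>y\<in>UNIV. killed_kernel P G x y) \<le> 1" for x
    using sum_mono[of UNIV "killed_kernel P G x" "P x"] row_sum_le[of x]
    by (force simp: killed_kernel_def nonneg)
qed

lemma killed_kernel_le: "killed_kernel P G x y \<le> P x y"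
  by (simp add: killed_kernel_def nonneg)

lemma mpow_killed_le: "mpow (killed_kernel P G) k x y \<le> mpow P k x y"
proof (induction k arbitrary: y)
  case (Suc k)
  then show ?case
    using substochastic.mpow_nonneg[OF substochastic_killed] substochastic.nonneg[OF substochastic_killed]
    by (auto intro!: sum_mono mult_mono killed_kernel_le simp: mpow_nonneg)
qed simp

lemma heat_killed_le: "0 \<le> t \<Longrightarrow> heat (killed_kernel P G) t x y \<le> heat P t x y"
  unfolding heat_eq_poi_pmf
  by (intro suminf_le summable_heat substochastic.summable_heat[OF substochastic_killed]
      mult_left_mono mpow_killed_le poi_pmf_nonneg)

lemma mpow_killed_row_sum:
  "z \<in> G \<Longrightarrow> (\<Sum>y\<in>G. mpow (killed_kernel P G) k z y) = stay_in P G k z"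
proof (induction k arbitrary: z)
  case (Suc k)
  have "(\<Sum>y\<in>G. mpow (killed_kernel P G) (Suc k) z y)
      = (\<Sum>w\<in>UNIV. killed_kernel P G z w * (\<Sum>y\<in>G. mpow (killed_kernel P G) k w y))"
    by (simp only: mpow_Suc_left sum_distrib_left) (rule sum.swap)
  also have "\<dots> = (\<Sum>w\<in>UNIV. P z w * stay_in P G k w)"
  proof (intro sum.cong refl)
    fix w
    show "killed_kernel P G z w * (\<Sum>y\<in>G. mpow (killed_kernel P G) k w y) = P z w * stay_in P G k w"
      unfolding killed_kernel_def[of P G z w] using Suc by (simp add: stay_in_outside)
  qed
  finally show ?case using Suc.prems by simp
qed simp

end

section \<open>Elementary inequalities\<close>

lemma tendsto_xlnx_at_right_0: "((\<lambda>x::real. x * ln x) \<longlongrightarrow> 0) (at_right 0)"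
  unfolding filterlim_at_right_to_top
  using tendsto_minus[OF ln_x_over_x_tendsto_0]
  by (simp add: ln_inverse divide_inverse mult.commute)

lemma isCont_xlnx: "isCont (\<lambda>x::real. x * ln x) c"
proof (cases "c = 0")
  case True
  have "((\<lambda>x::real. x * ln x) \<longlongrightarrow> 0) (at_left 0)"
    using tendsto_minus[OF tendsto_xlnx_at_right_0]
    by (subst filterlim_at_left_to_right) (simp add: ln_minus)
  then show ?thesis
    using True tendsto_xlnx_at_right_0 by (simp add: isCont_def filterlim_split_at)
qed (auto intro!: continuous_intros)

lemma tendsto_xlnx:
  assumes "(f \<longlongrightarrow> c) F"
  shows "((\<lambda>x. f x * ln (f x)) \<longlongrightarrow> c * ln (c::real)) F"
  using isCont_tendsto_compose[OF isCont_xlnx assms] by simp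

lemma xlnx_has_derivative:
  assumes "(g has_real_derivative g') (at t)" and "0 < g t"
  shows "((\<lambda>t. g t * ln (g t)) has_real_derivative g' * (ln (g t) + 1)) (at t)"
  using assms by (auto intro!: derivative_eq_intros simp: field_simps)

lemma one_minus_inverse_le_ln: "0 < x \<Longrightarrow> 1 - 1 / x \<le> ln (x::real)"
  using ln_le_minus_one[of "1 / x"] by (simp add: ln_div)

lemma mult_one_minus_ln_le_1: "0 < g \<Longrightarrow> g * (1 - ln g) \<le> (1::real)"
  using mult_left_mono[OF one_minus_inverse_le_ln[of g], of g] by (simp add: algebra_simps)

lemma sq_diff_le_diff_mult_diff_ln:
  assumes "0 < u" "0 < v"
  shows "(u - v)^2 \<le> (u + v) * ((u - v) * (ln u - ln (v::real)))"
proof -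
  have ordered: "(u - v)^2 \<le> (u + v) * ((u - v) * (ln u - ln v))" if "0 < v" "v \<le> u" for u v :: real
  proof -
    have "(u - v) / u \<le> ln u - ln v"
      using one_minus_inverse_le_ln[of "u / v"] that by (simp add: ln_div field_simps)
    then have ln_bound: "(u - v) * ((u - v) / u) \<le> (u - v) * (ln u - ln v)"
      using that by (intro mult_left_mono) auto
    have "(u - v)^2 = u * ((u - v) * ((u - v) / u))"
      using that by (simp add: power2_eq_square)
    also have "\<dots> \<le> (u + v) * ((u - v) * ((u - v) / u))"
      using that by (intro mult_right_mono) auto
    also have "\<dots> \<le> (u + v) * ((u - v) * (ln u - ln v))"
      using that by (intro mult_left_mono[OF ln_bound]) auto
    finally show ?thesis .
  qed
  show ?thesis
    using ordered[of v u] ordered[of u v] assms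
    by (cases "v \<le> u") (auto simp: power2_commute algebra_simps)
qed

lemma sq_diff_sqrt_le_diff_mult_diff_ln:
  assumes "0 < a" "0 < b"
  shows "(sqrt a - sqrt b)^2 \<le> (a - b) * (ln a - ln (b::real))"
proof -
  define u v where "u = sqrt a" and "v = sqrt b"
  have uv: "0 < u" "0 < v" "a = u^2" "b = v^2"
    using assms by (auto simp: u_def v_def)
  have "ln a = 2 * ln u" "ln b = 2 * ln v"
    using uv by (simp_all add: ln_realpow)
  then have "(a - b) * (ln a - ln b) = 2 * ((u + v) * ((u - v) * (ln u - ln v)))"
    by (simp add: uv(3,4) power2_eq_square algebra_simps)
  moreover have "(u - v)^2 \<le> (u + v) * ((u - v) * (ln u - ln v))"
    using uv(1,2) by (rule sq_diff_le_diff_mult_diff_ln)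
  ultimately show ?thesis
    using zero_le_power2[of "u - v"] unfolding u_def v_def by linarith
qed

lemma DERIV_sign_change_imp_min:
  fixes f f' :: "real \<Rightarrow> real"
  assumes deriv: "\<And>x. 0 < x \<Longrightarrow> (f has_real_derivative f' x) (at x)"
    and below: "\<And>x. 0 < x \<Longrightarrow> x \<le> c \<Longrightarrow> f' x \<le> 0" and above: "\<And>x. c \<le> x \<Longrightarrow> 0 \<le> f' x"
    and "0 < a" "0 < c"
  shows "f c \<le> f a"
proof (cases "a \<le> c")
  case True
  show ?thesis
  proof (rule DERIV_nonpos_imp_nonincreasing[OF True])
    fix x assume "a \<le> x" "x \<le> c"
    moreover from this have "0 < x" using \<open>0 < a\<close> by linarith
    ultimately show "\<exists>y. (f has_real_derivative y) (at x) \<and> y \<le> 0"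
      using deriv below by blast
  qed
next
  case False
  show ?thesis
  proof (rule DERIV_nonneg_imp_nondecreasing[of c a f])
    fix x assume "c \<le> x" "x \<le> a"
    moreover from this have "0 < x" using \<open>0 < c\<close> by linarith
    ultimately show "\<exists>y. (f has_real_derivative y) (at x) \<and> 0 \<le> y"
      using deriv above by blast
  qed (use False in simp)
qed

lemma pinsker_scalar:
  assumes "0 \<le> a"
  shows "3 * (a - 1)^2 \<le> (2 * a + 4) * (a * ln a - a + (1::real))"
proof (cases "a = 0")
  case False
  define g where "g x = 4 * x * ln x + 4 * ln x - 8 * x + 8" for x :: real
  define h where "h x = (2 * x + 4) * (x * ln x - x + 1) - 3 * (x - 1)^2" for x :: real
  have dg: "(g has_real_derivative 4 * (ln x + 1 / x - 1)) (at x)" if "0 < x" for x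
    using that unfolding g_def by (auto intro!: derivative_eq_intros simp: field_simps)
  have dg_nonneg: "0 \<le> 4 * (ln x + 1 / x - 1)" if "0 < x" for x :: real
    using one_minus_inverse_le_ln[OF that] by simp
  have g_mono: "g x \<le> g y" if "0 < x" "x \<le> y" for x y
  proof (rule DERIV_nonneg_imp_nondecreasing[OF that(2)])
    fix z assume "x \<le> z" "z \<le> y"
    then have "0 < z" using that(1) by linarith
    then show "\<exists>d. (g has_real_derivative d) (at z) \<and> 0 \<le> d"
      using dg dg_nonneg by blast
  qed
  have "g 1 = 0" by (simp add: g_def)
  then have g_le: "g x \<le> 0" if "0 < x" "x \<le> 1" for x
    using g_mono that by metis
  have g_ge: "0 \<le> g x" if "1 \<le> x" for x
    using g_mono[of 1 x] that \<open>g 1 = 0\<close> by simp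
  have dh: "(h has_real_derivative g x) (at x)" if "0 < x" for x
    using that unfolding h_def g_def
    by (auto intro!: derivative_eq_intros simp: field_simps power2_eq_square)
  have "h 1 \<le> h a"
    using False assms by (intro DERIV_sign_change_imp_min[OF dh g_le g_ge]) auto
  then show ?thesis by (simp add: h_def)
qed simp

lemma pinsker_uniform:
  fixes p :: "'x \<Rightarrow> real"
  assumes G: "finite G" "G \<noteq> {}" and p: "\<And>y. y \<in> G \<Longrightarrow> 0 \<le> p y" "(\<Sum>y\<in>G. p y) = 1"
  shows "(\<Sum>y\<in>G. \<bar>p y - 1 / real (card G)\<bar>)^2 \<le> 2 * (\<Sum>y\<in>G. p y * ln (real (card G) * p y))"
proof -
  define n where "n = real (card G)"
  have n: "0 < n" using G by (simp add: n_def card_gt_0_iff)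
  define a where "a y = n * p y" for y
  have a: "0 \<le> a y" if "y \<in> G" for y using p(1)[OF that] n by (simp add: a_def)
  then have a_pos: "0 < 2 * a y + 4" if "y \<in> G" for y using that by (simp add: add_nonneg_pos)
  have sum_a: "(\<Sum>y\<in>G. a y) = n" by (simp add: a_def p(2) flip: sum_distrib_left)
  define u w where "u y = sqrt ((2 * a y + 4) / 3)" and "w y = sqrt (3 * (a y - 1)^2 / (2 * a y + 4))"
    for y
  have "(\<Sum>y\<in>G. \<bar>a y - 1\<bar>)^2 = (\<Sum>y\<in>G. u y * w y)^2"
    using a_pos by (intro arg_cong[where f = "\<lambda>s. s^2"] sum.cong refl)
      (simp add: u_def w_def real_sqrt_mult[symmetric] less_imp_neq[symmetric])
  also have "\<dots> \<le> (\<Sum>y\<in>G. (u y)^2) * (\<Sum>y\<in>G. (w y)^2)"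
    by (rule Cauchy_Schwarz_ineq_sum)
  also have "(\<Sum>y\<in>G. (u y)^2) = 2 * n"
    using a by (simp add: u_def sum_divide_distrib[symmetric] sum.distrib sum_a
        flip: sum_distrib_left) (simp add: n_def)
  also have "(\<Sum>y\<in>G. (w y)^2) \<le> (\<Sum>y\<in>G. a y * ln (a y) - a y + 1)"
  proof (intro sum_mono)
    fix y assume y: "y \<in> G"
    have "(w y)^2 = 3 * (a y - 1)^2 / (2 * a y + 4)"
      using a_pos[OF y] by (simp add: w_def)
    also have "\<dots> \<le> a y * ln (a y) - a y + 1"
      using pinsker_scalar[OF a[OF y]] by (subst pos_divide_le_eq[OF a_pos[OF y]]) (metis mult.commute)
    finally show "(w y)^2 \<le> a y * ln (a y) - a y + 1" .
  qed
  also have "\<dots> = (\<Sum>y\<in>G. a y * ln (a y))"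
    by (simp add: sum.distrib sum_subtractf sum_a n_def)
  finally have "(\<Sum>y\<in>G. \<bar>a y - 1\<bar>)^2 \<le> 2 * n * (\<Sum>y\<in>G. a y * ln (a y))"
    using n by (simp add: mult_left_mono)
  moreover have "(\<Sum>y\<in>G. \<bar>p y - 1 / n\<bar>) = (\<Sum>y\<in>G. \<bar>a y - 1\<bar>) / n"
    using n by (simp add: sum_divide_distrib a_def abs_div_pos[symmetric] field_simps)
  moreover have "(\<Sum>y\<in>G. a y * ln (a y)) = n * (\<Sum>y\<in>G. p y * ln (n * p y))"
    by (simp add: a_def sum_distrib_left mult.assoc)
  ultimately show ?thesis
    using n by (simp add: power_divide divide_le_eq power2_eq_square n_def mult_ac)
qed

lemma linear_differential_inequality:
  fixes f f' :: "real \<Rightarrow> real"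
  assumes A: "0 < A" and T: "0 \<le> T" and c: "0 \<le> c"
    and deriv: "\<And>t. 0 \<le> t \<Longrightarrow> t \<le> T \<Longrightarrow> (f has_real_derivative f' t) (at t)"
    and bound: "\<And>t. 0 \<le> t \<Longrightarrow> t \<le> T \<Longrightarrow> f' t \<le> - f t / A + c"
  shows "f T \<le> exp (- T / A) * f 0 + A * c"
proof -
  define \<psi> where "\<psi> t = exp (t / A) * (f t - A * c)" for t
  have "\<psi> T \<le> \<psi> 0"
  proof (rule DERIV_nonpos_imp_nonincreasing[OF T])
    fix t assume t: "0 \<le> t" "t \<le> T"
    have "(\<psi> has_real_derivative exp (t / A) * (f' t + f t / A - c)) (at t)"
      unfolding \<psi>_def using A deriv[OF t]
      by (auto intro!: derivative_eq_intros simp: field_simps)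
    moreover have "exp (t / A) * (f' t + f t / A - c) \<le> 0"
      using bound[OF t] by (simp add: mult_nonneg_nonpos)
    ultimately show "\<exists>y. (\<psi> has_real_derivative y) (at t) \<and> y \<le> 0" by blast
  qed
  then have "f T - A * c \<le> exp (- T / A) * (f 0 - A * c)"
    by (simp add: \<psi>_def exp_minus field_simps)
  moreover have "0 \<le> exp (- T / A) * (A * c)"
    using A c by simp
  ultimately show ?thesis by (simp add: algebra_simps)
qed

text \<open>If at most \<open>e\<close> of the mass is lost, the normalisation \<open>1/m\<close> costs at most another \<open>e\<close>:
  for \<open>m > 1/2\<close> one has \<open>1/\<surd>m - 1 \<le> 1 - m\<close>, and \<open>\<surd>(R/2) < 1\<close>.\<close>

lemma mass_defect_sqrt_le:
  fixes R e m :: real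
  assumes R: "0 \<le> R" and e: "0 \<le> e" and m: "1 - e \<le> m"
    and small: "2 * e + sqrt (R / 2) < 1"
  shows "(1 - m) + sqrt (R / (2 * m)) \<le> 2 * e + sqrt (R / 2)"
proof (cases "m \<le> 1")
  case False
  then have "sqrt (R / (2 * m)) \<le> sqrt (R / 2)"
    using R by (intro real_sqrt_le_mono divide_left_mono) auto
  then show ?thesis
    using False e by linarith
next
  case True
  define a s where "a = sqrt (R / 2)" and "s = sqrt m"
  have a: "0 \<le> a" "a < 1"
    using R e small unfolding a_def by (simp, linarith)
  have "1/2 < m" using m small a e unfolding a_def[symmetric] by linarith
  then have s: "0 < s" "s \<le> 1" "s * s = m" using True by (auto simp: s_def)
  then have "m \<le> s" using mult_left_le[of s s] by simp
  then have "1 \<le> s * (1 + s)"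
    using s(3) \<open>1/2 < m\<close> by (simp add: algebra_simps)
  then have "(1 - s) * 1 \<le> (1 - s) * (s * (1 + s))"
    using s(2) by (intro mult_left_mono) auto
  then have "1 - s \<le> s * (1 - m)"
    using s(3) by (simp add: algebra_simps)
  then have "(1 - s) / s \<le> 1 - m"
    using s by (simp add: divide_le_eq mult.commute)
  have "sqrt (R / (2 * m)) = a / s"
    by (simp add: a_def s_def real_sqrt_divide[symmetric] mult.commute)
  also have "\<dots> = a + a * ((1 - s) / s)"
    using s by (simp add: field_simps)
  also have "\<dots> \<le> a + (1 - m)"
    using a s \<open>(1 - s) / s \<le> 1 - m\<close> mult_left_le_one_le[of "(1 - s) / s" a] by simp
  finally show ?thesis using m by (simp add: a_def)
qed

section \<open>Total variation and relative entropy\<close>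

lemma sum_UNIV_supported:
  "(\<And>x. x \<notin> G \<Longrightarrow> f x = 0) \<Longrightarrow> (\<Sum>x\<in>UNIV. f x) = (\<Sum>x\<in>G. f (x::'x::finite))"
  by (intro sum.mono_neutral_right) auto

lemma sum_UNIV_split: "(\<Sum>x\<in>UNIV. f x) = (\<Sum>x\<in>G. f x) + (\<Sum>x\<in>-G. f (x::'x::finite))"
  using sum.subset_diff[of G UNIV f] by (simp add: Compl_eq_Diff_UNIV add.commute)

lemma tv_dist_nonneg: "0 \<le> tv_dist \<nu> \<rho>"
  by (simp add: tv_dist_def sum_nonneg)

lemma tv_dist_triangle: "tv_dist \<nu> \<rho> \<le> tv_dist \<nu> \<sigma> + tv_dist \<sigma> \<rho>"
proof -
  have "(\<Sum>y\<in>UNIV. \<bar>\<nu> y - \<rho> y\<bar>) \<le> (\<Sum>y\<in>UNIV. \<bar>\<nu> y - \<sigma> y\<bar> + \<bar>\<sigma> y - \<rho> y\<bar>)"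
    by (intro sum_mono) linarith
  then show ?thesis by (simp add: tv_dist_def sum.distrib)
qed

lemma tv_dist_le_1:
  assumes "\<And>y. 0 \<le> \<nu> y" "\<And>y. 0 \<le> \<rho> y" "(\<Sum>y\<in>UNIV. \<nu> y) = 1" "(\<Sum>y\<in>UNIV. \<rho> y) = 1"
  shows "tv_dist \<nu> \<rho> \<le> 1"
proof -
  have "(\<Sum>y\<in>UNIV. \<bar>\<nu> y - \<rho> y\<bar>) \<le> (\<Sum>y\<in>UNIV. \<nu> y + \<rho> y)"
    using assms(1,2) by (intro sum_mono) (simp add: abs_le_iff)
  then show ?thesis using assms(3,4) by (simp add: tv_dist_def sum.distrib)
qed

lemma tv_dist_poi_mixture_le:
  fixes W :: "nat \<Rightarrow> 'x::finite \<Rightarrow> real"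
  assumes a: "0 \<le> a" and W: "\<And>j y. 0 \<le> W j y" "\<And>j. (\<Sum>y\<in>UNIV. W j y) = 1"
    and \<pi>: "\<And>y. 0 \<le> \<pi> y" "(\<Sum>y\<in>UNIV. \<pi> y) = 1"
  shows "tv_dist (\<lambda>y. \<Sum>j. poi_pmf a j * W j y) \<pi> \<le> (\<Sum>j. poi_pmf a j * tv_dist (W j) \<pi>)"
proof -
  have le_1: "W j y \<le> 1" "\<pi> y \<le> 1" for j y
    using member_le_sum[of y UNIV "W j"] member_le_sum[of y UNIV \<pi>] W \<pi> by auto
  have bounded: "\<bar>W j y - \<pi> y\<bar> \<le> 1" for j y
    using W(1)[of j y] \<pi>(1)[of y] le_1(1)[of j y] le_1(2)[of y] by (simp add: abs_le_iff)
  then have summable: "summable (\<lambda>j. poi_pmf a j * \<bar>W j y - \<pi> y\<bar>)" for y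
    using a by (auto intro!: summable_poi_pmf_mult[where C=1])
  have "\<bar>(\<Sum>j. poi_pmf a j * W j y) - \<pi> y\<bar> \<le> (\<Sum>j. poi_pmf a j * \<bar>W j y - \<pi> y\<bar>)" for y
  proof -
    have "summable (\<lambda>j. poi_pmf a j * W j y)"
      using a W(1) le_1 by (intro summable_poi_pmf_mult[where C=1]) auto
    from suminf_diff[OF this summable_mult2[OF summable_poi_pmf, of a "\<pi> y"]]
    have "(\<Sum>j. poi_pmf a j * W j y) - \<pi> y = (\<Sum>j. poi_pmf a j * (W j y - \<pi> y))"
      by (simp add: right_diff_distrib suminf_mult2[OF summable_poi_pmf, symmetric] suminf_poi_pmf)
    also have "\<bar>\<dots>\<bar> \<le> (\<Sum>j. \<bar>poi_pmf a j * (W j y - \<pi> y)\<bar>)"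
      using summable a by (intro summable_rabs) (simp add: abs_mult poi_pmf_nonneg)
    also have "\<dots> = (\<Sum>j. poi_pmf a j * \<bar>W j y - \<pi> y\<bar>)"
      using a by (simp add: abs_mult poi_pmf_nonneg)
    finally show ?thesis .
  qed
  then have "tv_dist (\<lambda>y. \<Sum>j. poi_pmf a j * W j y) \<pi>
      \<le> (1/2) * (\<Sum>y\<in>UNIV. \<Sum>j. poi_pmf a j * \<bar>W j y - \<pi> y\<bar>)"
    unfolding tv_dist_def by (intro mult_left_mono sum_mono) auto
  also have "\<dots> = (\<Sum>j. poi_pmf a j * tv_dist (W j) \<pi>)"
    using summable
    by (simp add: suminf_sum[symmetric] suminf_mult[symmetric] summable_sum tv_dist_def
        sum_distrib_left mult_ac)
  finally show ?thesis .
qed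

lemma cond_unif_nonneg: "0 \<le> cond_unif \<Omega> y"
  by (simp add: cond_unif_def)

lemma cond_unif_sum: "\<Omega> \<noteq> {} \<Longrightarrow> (\<Sum>y\<in>UNIV. cond_unif \<Omega> (y::'x::finite)) = 1"
  by (simp add: cond_unif_def sum.If_cases)

lemma tv_dist_cond_unif_subset:
  fixes G \<Omega> :: "'x::finite set"
  assumes "G \<subseteq> \<Omega>" "G \<noteq> {}"
  shows "tv_dist (cond_unif G) (cond_unif \<Omega>) = real (card (\<Omega> - G)) / real (card \<Omega>)"
proof -
  define n N where "n = real (card G)" and "N = real (card \<Omega>)"
  have n: "0 < n" and nN: "n \<le> N"
    using assms by (auto simp: n_def N_def card_gt_0_iff card_mono)
  have "\<bar>cond_unif G y - cond_unif \<Omega> y\<bar>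
      = (if y \<in> G then 1 / n - 1 / N else 0) + (if y \<in> \<Omega> - G then 1 / N else 0)" for y
    using assms(1) n nN by (auto simp: cond_unif_def frac_le n_def N_def)
  then have "(\<Sum>y\<in>UNIV. \<bar>cond_unif G y - cond_unif \<Omega> y\<bar>) = n * (1 / n - 1 / N) + (N - n) / N"
    using assms(1) by (simp add: sum.distrib flip: sum.inter_restrict add: card_Diff_subset card_mono
        of_nat_diff n_def N_def del: Diff_iff)
  also have "\<dots> = 2 * ((N - n) / N)"
    using n nN by (simp add: field_simps)
  finally have sum: "(\<Sum>y\<in>UNIV. \<bar>cond_unif G y - cond_unif \<Omega> y\<bar>) = 2 * ((N - n) / N)" .
  have "real (card (\<Omega> - G)) = N - n"
    using assms by (simp add: n_def N_def card_Diff_subset card_mono of_nat_diff)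
  then show ?thesis
    by (simp only: tv_dist_def sum N_def)
qed

text \<open>For \<open>m = (\<Sum>y\<in>G. b y) > 0\<close> this is \<open>m\<close> times the Kullback-Leibler divergence of
  \<open>b / m\<close> from the uniform distribution on \<open>G\<close> (see \<open>rel_ent_unif_eq_sum\<close>).\<close>

definition rel_ent_unif :: "'x set \<Rightarrow> ('x \<Rightarrow> real) \<Rightarrow> real" where
  "rel_ent_unif G b = (\<Sum>y\<in>G. b y * ln (b y)) - (\<Sum>y\<in>G. b y) * ln (\<Sum>y\<in>G. b y)
     + (\<Sum>y\<in>G. b y) * ln (real (card G))"

lemma rel_ent_unif_cong: "(\<And>y. y \<in> G \<Longrightarrow> b y = c y) \<Longrightarrow> rel_ent_unif G b = rel_ent_unif G c"
  by (simp add: rel_ent_unif_def cong: sum.cong)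

lemma rel_ent_unif_eq_sum:
  assumes G: "finite G" "G \<noteq> {}" and b: "\<And>y. y \<in> G \<Longrightarrow> 0 \<le> b y" and m: "0 < (\<Sum>y\<in>G. b y)"
  shows "rel_ent_unif G b = (\<Sum>y\<in>G. b y * ln (real (card G) * b y / (\<Sum>y\<in>G. b y)))"
proof -
  define m n where "m = (\<Sum>y\<in>G. b y)" and "n = real (card G)"
  have "n > 0" using G by (simp add: n_def card_gt_0_iff)
  have "b y * ln (n * b y / m) = b y * ln (b y) - b y * ln m + b y * ln n" if "y \<in> G" for y
    using b[OF that] m \<open>n > 0\<close>
    by (cases "b y = 0") (simp_all add: ln_div ln_mult m_def algebra_simps)
  then show ?thesis
    by (simp add: rel_ent_unif_def sum.distrib sum_subtractf flip: sum_distrib_right m_def n_def)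
qed

lemma rel_ent_unif_le_ln_card:
  assumes G: "finite G" and b: "\<And>y. 0 \<le> b y" and mass: "(\<Sum>y\<in>G. b y) \<le> 1"
  shows "rel_ent_unif G b \<le> ln (real (card G))"
proof -
  define m where "m = (\<Sum>y\<in>G. b y)"
  have "b y * ln (b y) \<le> b y * ln m" if "y \<in> G" for y
  proof (cases "b y = 0")
    case False
    have "b y \<le> m"
      unfolding m_def using that b G by (intro member_le_sum) auto
    then show ?thesis using False b[of y] by (intro mult_left_mono) auto
  qed simp
  then have "rel_ent_unif G b \<le> m * ln (real (card G))"
    unfolding rel_ent_unif_def m_def[symmetric] using sum_mono[of G "\<lambda>y. b y * ln (b y)"]
    by (simp add: m_def sum_distrib_right)
  also have "\<dots> \<le> ln (real (card G))"
    using mass mult_right_mono[OF mass, of "ln (real (card G))"]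
    by (cases "card G = 0") (auto simp: m_def)
  finally show ?thesis .
qed

lemma tendsto_rel_ent_unif:
  "(\<And>y. ((\<lambda>e. f e y) \<longlongrightarrow> g y) F) \<Longrightarrow> ((\<lambda>e. rel_ent_unif G (f e)) \<longlongrightarrow> rel_ent_unif G g) F"
  unfolding rel_ent_unif_def by (intro tendsto_intros tendsto_xlnx)

lemma rel_ent_unif_has_derivative:
  assumes G: "finite G" "G \<noteq> {}"
    and deriv: "\<And>y. y \<in> G \<Longrightarrow> ((\<lambda>t. b t y) has_real_derivative d y) (at t)"
    and pos: "\<And>y. y \<in> G \<Longrightarrow> 0 < b t y"
  shows "((\<lambda>t. rel_ent_unif G (b t)) has_real_derivative
     (\<Sum>y\<in>G. d y * ln (b t y)) - (\<Sum>y\<in>G. d y) * ln (\<Sum>y\<in>G. b t y)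
       + (\<Sum>y\<in>G. d y) * ln (real (card G))) (at t)"
proof -
  have mass: "((\<lambda>t. \<Sum>y\<in>G. b t y) has_real_derivative (\<Sum>y\<in>G. d y)) (at t)"
    using deriv by (rule DERIV_sum)
  have "((\<lambda>t. rel_ent_unif G (b t)) has_real_derivative
     (\<Sum>y\<in>G. d y * (ln (b t y) + 1)) - (\<Sum>y\<in>G. d y) * (ln (\<Sum>y\<in>G. b t y) + 1)
       + (\<Sum>y\<in>G. d y) * ln (real (card G))) (at t)"
    unfolding rel_ent_unif_def
    using G pos by (intro DERIV_add DERIV_diff DERIV_sum xlnx_has_derivative deriv mass
        DERIV_cmult_right sum_pos) auto
  then show ?thesis
    by (simp add: distrib_left sum.distrib algebra_simps)
qed

lemma rel_ent_unif_le_Ent_unif: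
  fixes g :: "'x::finite \<Rightarrow> real"
  assumes g: "\<And>x. 0 \<le> g x" "\<And>x. x \<notin> G \<Longrightarrow> g x = 0"
  shows "rel_ent_unif G g \<le> real CARD('x) * Ent_unif g"
proof -
  define M m where "M = real CARD('x)" and "m = (\<Sum>y\<in>G. g y)"
  have M: "0 < M" and "real (card G) \<le> M"
    by (simp_all add: M_def card_mono)
  have sums: "(\<Sum>x\<in>UNIV. g x) = m" "(\<Sum>x\<in>UNIV. g x * ln (g x)) = (\<Sum>y\<in>G. g y * ln (g y))"
    using g(2) by (simp_all add: m_def sum_UNIV_supported)
  have "M * Ent_unif g = (\<Sum>y\<in>G. g y * ln (g y)) - M * (m / M * ln (m / M))"
    using M by (simp add: Ent_unif_def unif_mean_def sums right_diff_distrib flip: M_def m_def)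
  also have "M * (m / M * ln (m / M)) = m * ln m - m * ln M"
    using M g(1) by (cases "m = 0") (simp_all add: m_def ln_div sum_nonneg field_simps
        order.not_eq_order_implies_strict)
  finally have "M * Ent_unif g = rel_ent_unif G g + m * (ln M - ln (real (card G)))"
    by (simp add: rel_ent_unif_def m_def algebra_simps)
  moreover have "0 \<le> m * (ln M - ln (real (card G)))"
  proof (cases "G = {}")
    case False
    then have "ln (real (card G)) \<le> ln M"
      using \<open>real (card G) \<le> M\<close> M by (intro ln_le_cancel_iff[THEN iffD2]) (auto simp: card_gt_0_iff)
    then show ?thesis using g(1) by (simp add: m_def sum_nonneg)
  qed (simp add: m_def)
  ultimately show ?thesis by (simp add: M_def)
qed

lemma dirichlet_unif_supported:
  fixes P :: "'x::finite \<Rightarrow> 'x \<Rightarrow> real"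
  assumes sym: "\<And>x y. P x y = P y x" and F: "\<And>x. x \<notin> G \<Longrightarrow> F x = 0"
  shows "real CARD('x) * dirichlet_unif P F
    = (1/2) * (\<Sum>x\<in>G. \<Sum>y\<in>G. P x y * (F x - F y)^2) + (\<Sum>x\<in>G. (\<Sum>y\<in>-G. P x y) * (F x)^2)"
proof -
  define D where "D x y = P x y * (F x - F y)^2" for x y
  have "(\<Sum>x\<in>UNIV. \<Sum>y\<in>UNIV. D x y)
     = (\<Sum>x\<in>G. \<Sum>y\<in>G. D x y) + (\<Sum>x\<in>G. \<Sum>y\<in>-G. D x y)
       + ((\<Sum>x\<in>-G. \<Sum>y\<in>G. D x y) + (\<Sum>x\<in>-G. \<Sum>y\<in>-G. D x y))"
    using sum_UNIV_split[of "\<lambda>x. \<Sum>y\<in>UNIV. D x y" G] sum_UNIV_split[of "D _" G]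
    by (simp add: sum.distrib)
  also have "(\<Sum>x\<in>-G. \<Sum>y\<in>G. D x y) = (\<Sum>x\<in>G. \<Sum>y\<in>-G. D x y)"
    by (subst sum.swap) (simp add: D_def sym power2_commute)
  also have "(\<Sum>x\<in>G. \<Sum>y\<in>-G. D x y) = (\<Sum>x\<in>G. (\<Sum>y\<in>-G. P x y) * (F x)^2)"
    by (simp add: D_def F sum_distrib_right)
  also have "(\<Sum>x\<in>-G. \<Sum>y\<in>-G. D x y) = 0"
    by (simp add: D_def F)
  moreover have "dirichlet_unif P F = (1/2) * (1 / real CARD('x)) * (\<Sum>x\<in>UNIV. \<Sum>y\<in>UNIV. D x y)"
    by (simp add: dirichlet_unif_def D_def sum_distrib_left mult.assoc)
  ultimately show ?thesis
    by (simp add: D_def)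
qed

lemma tv_dist_normalized_part_le:
  fixes w b :: "'x::finite \<Rightarrow> real"
  assumes w: "\<And>y. 0 \<le> w y" "(\<Sum>y\<in>UNIV. w y) = 1"
    and b: "\<And>y. y \<in> G \<Longrightarrow> 0 \<le> b y" "\<And>y. y \<in> G \<Longrightarrow> b y \<le> w y"
    and m: "m = (\<Sum>y\<in>G. b y)" "0 < m"
  shows "tv_dist w (\<lambda>y. if y \<in> G then b y / m else 0) \<le> 1 - m"
proof -
  have "m \<le> (\<Sum>y\<in>G. w y)"
    unfolding m by (intro sum_mono b)
  also have "\<dots> \<le> 1"
    using w sum_mono2[of UNIV G w] by simp
  finally have "m \<le> 1" .
  have "\<bar>w y - b y / m\<bar> \<le> (w y - b y) + (b y / m - b y)" if "y \<in> G" for y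
    using b[OF that] m \<open>m \<le> 1\<close> by (simp add: abs_le_iff le_divide_eq mult_left_le)
  then have "(\<Sum>y\<in>G. \<bar>w y - b y / m\<bar>) \<le> (\<Sum>y\<in>G. (w y - b y) + (b y / m - b y))"
    by (rule sum_mono)
  also have "\<dots> = (\<Sum>y\<in>G. w y) - m + (1 - m)"
    using m by (simp add: sum.distrib sum_subtractf sum_negf sum_distrib_left flip: sum_divide_distrib)
  finally have "(\<Sum>y\<in>G. \<bar>w y - b y / m\<bar>) \<le> (\<Sum>y\<in>G. w y) - m + (1 - m)" .
  then show ?thesis
    using w sum_UNIV_split[of w G] sum_UNIV_split[of "\<lambda>y. \<bar>w y - (if y \<in> G then b y / m else 0)\<bar>" G]
    by (simp add: tv_dist_def)
qed

lemma tv_dist_normalized_cond_unif_le: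
  fixes b :: "'x::finite \<Rightarrow> real"
  assumes G: "G \<noteq> {}" and b: "\<And>y. y \<in> G \<Longrightarrow> 0 \<le> b y" and m: "m = (\<Sum>y\<in>G. b y)" "0 < m"
  shows "tv_dist (\<lambda>y. if y \<in> G then b y / m else 0) (cond_unif G) \<le> sqrt (rel_ent_unif G b / (2 * m))"
proof -
  have "(\<Sum>y\<in>G. \<bar>b y / m - 1 / real (card G)\<bar>)^2
      \<le> 2 * (\<Sum>y\<in>G. b y / m * ln (real (card G) * (b y / m)))"
    using G b m by (intro pinsker_uniform) (auto simp flip: sum_divide_distrib)
  also have "\<dots> = 2 * (rel_ent_unif G b / m)"
    using G b m by (simp add: rel_ent_unif_eq_sum sum_divide_distrib)
  also have "\<dots> = 2^2 * (rel_ent_unif G b / (2 * m))"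
    by (simp add: power2_eq_square)
  moreover have "(\<Sum>y\<in>UNIV. \<bar>(if y \<in> G then b y / m else 0) - cond_unif G y\<bar>)
      = (\<Sum>y\<in>G. \<bar>b y / m - 1 / real (card G)\<bar>)"
    by (subst sum_UNIV_supported[of G]) (auto simp: cond_unif_def)
  ultimately have "(\<Sum>y\<in>UNIV. \<bar>(if y \<in> G then b y / m else 0) - cond_unif G y\<bar>)
      \<le> sqrt (2^2 * (rel_ent_unif G b / (2 * m)))"
    by (intro real_le_rsqrt) simp
  then show ?thesis
    by (simp only: tv_dist_def real_sqrt_mult real_sqrt_abs)
qed

lemma tv_dist_cond_unif_le:
  fixes w b :: "'x::finite \<Rightarrow> real"
  assumes w: "\<And>y. 0 \<le> w y" "(\<Sum>y\<in>UNIV. w y) = 1"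
    and b: "\<And>y. y \<in> G \<Longrightarrow> 0 \<le> b y" "\<And>y. y \<in> G \<Longrightarrow> b y \<le> w y"
    and m: "m = (\<Sum>y\<in>G. b y)" "0 < m" and G: "G \<subseteq> \<Omega>" "G \<noteq> {}"
  shows "tv_dist w (cond_unif \<Omega>)
    \<le> (1 - m) + sqrt (rel_ent_unif G b / (2 * m)) + real (card (\<Omega> - G)) / real (card \<Omega>)"
proof -
  let ?p = "\<lambda>y. if y \<in> G then b y / m else 0"
  have "tv_dist w (cond_unif \<Omega>) \<le> tv_dist w ?p + tv_dist ?p (cond_unif G) + tv_dist (cond_unif G) (cond_unif \<Omega>)"
    using tv_dist_triangle[of w "cond_unif \<Omega>" ?p] tv_dist_triangle[of ?p "cond_unif \<Omega>" "cond_unif G"]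
    by linarith
  then show ?thesis
    using tv_dist_normalized_part_le[OF w b m] tv_dist_normalized_cond_unif_le[OF G(2) b(1) m]
      tv_dist_cond_unif_subset[OF G] by linarith
qed

section \<open>Entropy decay of the chain killed outside \<open>G\<close>\<close>

locale restricted_log_sobolev = stochastic P for P :: "'x::finite \<Rightarrow> 'x \<Rightarrow> real" +
  fixes \<Omega> G :: "'x set" and A :: real
  assumes symmetric: "\<And>x y. P x y = P y x"
    and invariant: "\<And>x y. x \<in> \<Omega> \<Longrightarrow> y \<notin> \<Omega> \<Longrightarrow> P x y = 0"
    and G_subset: "G \<subseteq> \<Omega>" and G_ne: "G \<noteq> {}" and A_pos: "0 < A"
    and log_sobolev: "\<And>F. \<forall>x. 0 \<le> F x \<Longrightarrow> \<forall>x. x \<notin> G \<longrightarrow> F x = 0 \<Longrightarrow>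
      Ent_unif (\<lambda>x. (F x)^2) \<le> A * dirichlet_unif P F"
begin

definition escape :: "'x \<Rightarrow> real" where
  "escape x = (\<Sum>y\<in>-G. P x y)"

definition rho :: real where
  "rho = real (card (\<Omega> - G)) / real (card G)"

lemma card_G_pos: "0 < real (card G)"
  using G_ne by (simp add: card_gt_0_iff)

lemma ln_card_Omega_nonneg: "0 \<le> ln (real (card \<Omega>))"
proof -
  have "1 \<le> card G"
    using G_ne by (simp add: Suc_le_eq card_gt_0_iff)
  then show ?thesis
    using card_mono[OF finite G_subset] by simp
qed

lemma rho_nonneg: "0 \<le> rho"
  by (simp add: rho_def)

lemma escape_nonneg: "0 \<le> escape x"
  by (simp add: escape_def sum_nonneg nonneg)

lemma row_sum_G: "(\<Sum>y\<in>G. P x y) = 1 - escape x"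
  using sum_UNIV_split[of "P x" G] row_sum[of x] by (simp add: escape_def)

text \<open>By symmetry the total escape rate from \<open>G\<close> equals the total rate of entering \<open>G\<close>, and
  since \<open>\<Omega>\<close> is invariant only the states of \<open>\<Omega> - G\<close> can enter it.\<close>

lemma sum_escape_le: "(\<Sum>x\<in>G. escape x) \<le> real (card (\<Omega> - G))"
proof -
  have "(\<Sum>y\<in>G. P x y) \<le> (if x \<in> \<Omega> then 1 else 0)" for x
  proof (cases "x \<in> \<Omega>")
    case True
    then show ?thesis using row_sum_G[of x] escape_nonneg[of x] by simp
  next
    case False
    then have "(\<Sum>y\<in>G. P x y) = 0"
      using G_subset by (intro sum.neutral) (auto simp: symmetric[of x] invariant)
    then show ?thesis using False by simp
  qed
  then have "(\<Sum>x\<in>-G. \<Sum>y\<in>G. P x y) \<le> (\<Sum>x\<in>-G. if x \<in> \<Omega> then 1 else 0)"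
    by (rule sum_mono)
  also have "\<dots> = real (card (\<Omega> - G))"
    by (simp add: sum.If_cases Diff_eq Int_commute)
  finally show ?thesis
    unfolding escape_def by (subst sum.swap) (simp add: symmetric)
qed

lemma log_sobolev_rel_ent:
  assumes b: "\<And>y. y \<in> G \<Longrightarrow> 0 \<le> b y"
  shows "rel_ent_unif G b
    \<le> A * ((1/2) * (\<Sum>x\<in>G. \<Sum>y\<in>G. P x y * (sqrt (b x) - sqrt (b y))^2) + (\<Sum>x\<in>G. escape x * b x))"
proof -
  define F where "F x = (if x \<in> G then sqrt (b x) else 0)" for x
  have F: "\<forall>x. 0 \<le> F x" "\<forall>x. x \<notin> G \<longrightarrow> F x = 0"
    using b by (auto simp: F_def)
  have "rel_ent_unif G b = rel_ent_unif G (\<lambda>x. (F x)^2)"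
    using b by (intro rel_ent_unif_cong) (simp add: F_def)
  also have "\<dots> \<le> real CARD('x) * Ent_unif (\<lambda>x. (F x)^2)"
    using F by (intro rel_ent_unif_le_Ent_unif) auto
  also have "\<dots> \<le> A * (real CARD('x) * dirichlet_unif P F)"
    using log_sobolev[OF F] by (simp add: mult.left_commute)
  also have "real CARD('x) * dirichlet_unif P F
      = (1/2) * (\<Sum>x\<in>G. \<Sum>y\<in>G. P x y * (sqrt (b x) - sqrt (b y))^2) + (\<Sum>x\<in>G. escape x * b x)"
    using F b by (subst dirichlet_unif_supported[OF symmetric]) (auto simp: F_def escape_def)
  finally show ?thesis .
qed

lemma generator_pairing:
  "(\<Sum>y\<in>G. ((\<Sum>z\<in>G. b z * P z y) - b y) * f y)
    = - (1/2) * (\<Sum>x\<in>G. \<Sum>y\<in>G. P x y * ((b x - b y) * (f x - f y))) - (\<Sum>x\<in>G. escape x * b x * f x)"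
proof -
  define X1 X2 where "X1 = (\<Sum>x\<in>G. \<Sum>y\<in>G. P x y * (b x * f x))"
    and "X2 = (\<Sum>x\<in>G. \<Sum>y\<in>G. P x y * (b x * f y))"
  have swap: "(\<Sum>x\<in>G. \<Sum>y\<in>G. P x y * h y x) = (\<Sum>x\<in>G. \<Sum>y\<in>G. P x y * h x y)" for h
    by (subst sum.swap) (simp add: symmetric)
  have "(\<Sum>x\<in>G. \<Sum>y\<in>G. P x y * ((b x - b y) * (f x - f y))) = 2 * X1 - 2 * X2"
    using swap[of "\<lambda>x y. b x * f x"] swap[of "\<lambda>x y. b x * f y"]
    by (simp add: X1_def X2_def algebra_simps sum.distrib sum_subtractf)
  moreover have "(\<Sum>y\<in>G. (\<Sum>z\<in>G. b z * P z y) * f y) = X2"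
  proof -
    have "(\<Sum>y\<in>G. (\<Sum>z\<in>G. b z * P z y) * f y) = (\<Sum>y\<in>G. \<Sum>z\<in>G. P z y * (b z * f y))"
      by (simp only: sum_distrib_right) (simp only: mult_ac)
    also have "\<dots> = X2"
      unfolding X2_def by (rule sum.swap)
    finally show ?thesis .
  qed
  moreover have "(\<Sum>y\<in>G. b y * f y) = X1 + (\<Sum>x\<in>G. escape x * b x * f x)"
  proof -
    have "(\<Sum>y\<in>G. b y * f y) = (\<Sum>x\<in>G. (\<Sum>y\<in>G. P x y) * (b x * f x) + escape x * b x * f x)"
      by (intro sum.cong refl) (simp add: row_sum_G algebra_simps)
    then show ?thesis
      by (simp only: X1_def sum.distrib sum_distrib_right)
  qed
  ultimately show ?thesis
    by (simp add: left_diff_distrib sum_subtractf)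
      (simp add: field_simps)
qed

lemma escape_entropy_le:
  assumes b: "\<And>y. y \<in> G \<Longrightarrow> 0 < b y"
  defines "m \<equiv> \<Sum>y\<in>G. b y"
  shows "(\<Sum>x\<in>G. escape x * (b x * (1 - ln (real (card G) * b x / m)))) \<le> rho * m"
proof -
  define n where "n = real (card G)"
  have "0 < m" unfolding m_def using G_ne b by (intro sum_pos) auto
  have "b x * (1 - ln (n * b x / m)) \<le> m / n" if "x \<in> G" for x
  proof -
    define g where "g = n * b x / m"
    have "0 < g" using b[OF that] \<open>0 < m\<close> card_G_pos by (simp add: g_def n_def)
    have "m / n * g = b x"
      using \<open>0 < m\<close> G_ne by (simp add: g_def n_def)
    then have "b x * (1 - ln (n * b x / m)) = m / n * (g * (1 - ln g))"
      unfolding g_def[symmetric] mult.assoc[symmetric] by simp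
    also have "\<dots> \<le> m / n"
      using \<open>0 < m\<close> card_G_pos
      by (intro mult_left_le mult_one_minus_ln_le_1[OF \<open>0 < g\<close>]) (simp add: n_def)
    finally show ?thesis .
  qed
  then have "(\<Sum>x\<in>G. escape x * (b x * (1 - ln (n * b x / m)))) \<le> (\<Sum>x\<in>G. escape x * (m / n))"
    by (intro sum_mono mult_left_mono escape_nonneg)
  also have "\<dots> = (\<Sum>x\<in>G. escape x) * (m / n)"
    by (rule sum_distrib_right[symmetric])
  also have "\<dots> \<le> real (card (\<Omega> - G)) * (m / n)"
    using sum_escape_le \<open>0 < m\<close> card_G_pos by (intro mult_right_mono) (auto simp: n_def)
  finally show ?thesis by (simp add: rho_def n_def)
qed

text \<open>The left-hand side is the time derivative of \<open>rel_ent_unif G\<close> along the killed flow,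
  whose generator applied to \<open>b\<close> is \<open>d\<close>.\<close>

lemma entropy_production_le:
  assumes b: "\<And>y. y \<in> G \<Longrightarrow> 0 < b y"
  defines "d y \<equiv> (\<Sum>z\<in>G. b z * P z y) - b y" and "m \<equiv> \<Sum>y\<in>G. b y"
  shows "(\<Sum>y\<in>G. d y * ln (b y)) - (\<Sum>y\<in>G. d y) * ln m + (\<Sum>y\<in>G. d y) * ln (real (card G))
    \<le> - rel_ent_unif G b / A + rho * m"
proof -
  define n K Sym where "n = real (card G)" and "K = (\<Sum>x\<in>G. escape x * b x)"
    and "Sym = (1/2) * (\<Sum>x\<in>G. \<Sum>y\<in>G. P x y * ((b x - b y) * (ln (b x) - ln (b y))))"
  have "0 < m" unfolding m_def using G_ne b by (intro sum_pos) auto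
  have sum_d: "(\<Sum>y\<in>G. d y) = - K"
    using generator_pairing[of b "\<lambda>_. 1"] by (simp add: d_def K_def)
  have "rel_ent_unif G b \<le> A * (Sym + K)"
  proof -
    have "rel_ent_unif G b
        \<le> A * ((1/2) * (\<Sum>x\<in>G. \<Sum>y\<in>G. P x y * (sqrt (b x) - sqrt (b y))^2) + K)"
      using log_sobolev_rel_ent[of b] b by (simp add: K_def less_imp_le)
    also have "\<dots> \<le> A * (Sym + K)"
      unfolding Sym_def using b A_pos
      by (intro mult_left_mono add_right_mono sum_mono sq_diff_sqrt_le_diff_mult_diff_ln) (auto simp: nonneg)
    finally show ?thesis .
  qed
  then have "rel_ent_unif G b / A \<le> Sym + K"
    using A_pos by (simp add: pos_divide_le_eq mult.commute)
  then have Sym: "rel_ent_unif G b / A - K \<le> Sym"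
    by simp
  have "escape x * b x * ln (n * b x / m) = escape x * b x * ln (b x) - escape x * b x * ln m
      + escape x * b x * ln n" if "x \<in> G" for x
    using b[OF that] \<open>0 < m\<close> G_ne by (simp add: ln_div ln_mult n_def algebra_simps)
  then have escape_ln: "(\<Sum>x\<in>G. escape x * b x * ln (n * b x / m))
      = (\<Sum>x\<in>G. escape x * b x * ln (b x)) - K * ln m + K * ln n"
    by (simp add: sum.distrib sum_subtractf K_def sum_distrib_right cong: sum.cong)
  have "(\<Sum>y\<in>G. d y * ln (b y)) = - Sym - (\<Sum>x\<in>G. escape x * b x * ln (b x))"
    using generator_pairing[of b "\<lambda>y. ln (b y)"] unfolding d_def Sym_def by simp
  then have "(\<Sum>y\<in>G. d y * ln (b y)) - (\<Sum>y\<in>G. d y) * ln m + (\<Sum>y\<in>G. d y) * ln n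
      = - Sym - (\<Sum>x\<in>G. escape x * b x * ln (n * b x / m))"
    by (simp add: sum_d escape_ln)
  also have "\<dots> \<le> - rel_ent_unif G b / A + (\<Sum>x\<in>G. escape x * (b x * (1 - ln (n * b x / m))))"
    using Sym by (simp add: K_def algebra_simps sum_subtractf)
  also have "\<dots> \<le> - rel_ent_unif G b / A + rho * m"
    using escape_entropy_le[OF b] by (simp add: n_def m_def)
  finally show ?thesis by (simp add: n_def)
qed

sublocale killed: substochastic "killed_kernel P G"
  by (rule substochastic_killed)

text \<open>The mass, still inside \<open>G\<close> at time \<open>t\<close>, of the continuous-time chain started from \<open>b\<close>
  and killed on leaving \<open>G\<close>.\<close>

definition killed_flow :: "('x \<Rightarrow> real) \<Rightarrow> real \<Rightarrow> 'x \<Rightarrow> real" where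
  "killed_flow b t y = (\<Sum>z\<in>G. b z * heat (killed_kernel P G) t z y)"

lemma killed_flow_has_derivative:
  assumes "y \<in> G"
  shows "((\<lambda>t. killed_flow b t y) has_real_derivative
    (\<Sum>w\<in>G. killed_flow b t w * P w y) - killed_flow b t y) (at t)"
proof -
  have "(\<Sum>w\<in>UNIV. heat (killed_kernel P G) t z w * killed_kernel P G w y)
      = (\<Sum>w\<in>G. heat (killed_kernel P G) t z w * P w y)" for z
    using assms by (subst sum_UNIV_supported[of G]) (auto simp: killed_kernel_def)
  then have "((\<lambda>t. heat (killed_kernel P G) t z y) has_real_derivative
      (\<Sum>w\<in>G. heat (killed_kernel P G) t z w * P w y) - heat (killed_kernel P G) t z y) (at t)" for z
    using killed.heat_has_derivative[of z y t] by simp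
  then have "((\<lambda>t. killed_flow b t y) has_real_derivative
      (\<Sum>z\<in>G. b z * ((\<Sum>w\<in>G. heat (killed_kernel P G) t z w * P w y)
        - heat (killed_kernel P G) t z y))) (at t)"
    unfolding killed_flow_def by (auto intro!: DERIV_sum DERIV_cmult)
  then show ?thesis
    by (simp add: killed_flow_def right_diff_distrib sum_subtractf sum_distrib_left
        sum_distrib_right mult_ac) (subst sum.swap, simp)
qed

lemma killed_flow_0: "y \<in> G \<Longrightarrow> killed_flow b 0 y = b y"
  by (simp add: killed_flow_def killed.heat_0 if_distrib cong: if_cong)

lemma killed_flow_nonneg: "(\<And>z. z \<in> G \<Longrightarrow> 0 \<le> b z) \<Longrightarrow> 0 \<le> t \<Longrightarrow> 0 \<le> killed_flow b t y"
  unfolding killed_flow_def by (intro sum_nonneg mult_nonneg_nonneg killed.heat_nonneg) auto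

lemma killed_flow_pos:
  assumes b: "\<And>z. z \<in> G \<Longrightarrow> 0 < b z" and y: "y \<in> G" and t: "0 \<le> t"
  shows "0 < killed_flow b t y"
proof -
  have "0 < b y * exp (- t)"
    using b[OF y] by simp
  also have "\<dots> \<le> b y * heat (killed_kernel P G) t y y"
    using b[OF y] t by (intro mult_left_mono killed.heat_diag_ge) auto
  also have "\<dots> \<le> killed_flow b t y"
    unfolding killed_flow_def using b y t
    by (intro member_le_sum[where f = "\<lambda>z. b z * heat (killed_kernel P G) t z y"]
        mult_nonneg_nonneg killed.heat_nonneg) (auto simp: less_imp_le)
  finally show ?thesis .
qed

lemma killed_flow_mass_le:
  assumes b: "\<And>z. z \<in> G \<Longrightarrow> 0 \<le> b z" and t: "0 \<le> t"
  shows "(\<Sum>y\<in>G. killed_flow b t y) \<le> (\<Sum>z\<in>G. b z)"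
proof -
  have "(\<Sum>y\<in>G. heat (killed_kernel P G) t z y) \<le> 1" for z
    using killed.heat_row_sum_le[OF t, of z] killed.heat_nonneg[OF t]
      sum_mono2[of UNIV G "heat (killed_kernel P G) t z"] by simp
  then show ?thesis
    unfolding killed_flow_def using b
    by (subst sum.swap) (auto simp flip: sum_distrib_left intro!: sum_mono mult_left_le)
qed

lemma killed_flow_mass_eq:
  assumes t: "0 \<le> t"
  shows "(\<Sum>y\<in>G. killed_flow b t y) = (\<Sum>k. poi_pmf t k * (\<Sum>z\<in>G. b z * stay_in P G k z))"
proof -
  have "(\<Sum>y\<in>G. killed_flow b t y) = (\<Sum>z\<in>G. b z * (\<Sum>k. poi_pmf t k * stay_in P G k z))"
    unfolding killed_flow_def using t
    by (subst sum.swap) (simp add: killed.heat_row_sum_eq mpow_killed_row_sum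
        flip: sum_distrib_left cong: sum.cong)
  also have "\<dots> = (\<Sum>k. \<Sum>z\<in>G. b z * (poi_pmf t k * stay_in P G k z))"
    using t by (subst suminf_sum) (auto intro!: summable_mult summable_poi_pmf_mult[where C=1]
        suminf_mult[symmetric] sum.cong simp: stay_in_nonneg stay_in_le_1)
  finally show ?thesis
    by (simp add: sum_distrib_left mult_ac)
qed

lemma killed_flow_le_heat:
  assumes b: "\<And>z. 0 \<le> b z" and t: "0 \<le> t"
  shows "killed_flow b t y \<le> (\<Sum>z\<in>UNIV. b z * heat P t z y)"
  unfolding killed_flow_def using b t
  by (intro order.trans[OF sum_mono sum_mono2[of UNIV G]] mult_left_mono heat_killed_le)
    (auto intro: mult_nonneg_nonneg heat_nonneg)

lemma killed_flow_add_const: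
  "killed_flow (\<lambda>z. b z + e) t y = killed_flow b t y + e * killed_flow (\<lambda>_. 1) t y"
  by (simp add: killed_flow_def distrib_right sum.distrib sum_distrib_left)

lemma rel_ent_killed_flow_le_pos:
  assumes b: "\<And>z. z \<in> G \<Longrightarrow> 0 < b z" and T: "0 \<le> T"
  shows "rel_ent_unif G (killed_flow b T) \<le> exp (- T / A) * rel_ent_unif G b + A * (rho * (\<Sum>z\<in>G. b z))"
proof -
  define D where "D t = (let d = \<lambda>y. (\<Sum>w\<in>G. killed_flow b t w * P w y) - killed_flow b t y in
    (\<Sum>y\<in>G. d y * ln (killed_flow b t y)) - (\<Sum>y\<in>G. d y) * ln (\<Sum>y\<in>G. killed_flow b t y)
      + (\<Sum>y\<in>G. d y) * ln (real (card G)))" for t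
  have pos: "\<And>y. y \<in> G \<Longrightarrow> 0 < killed_flow b t y" if "0 \<le> t" for t
    using b that by (intro killed_flow_pos) auto
  have "rel_ent_unif G (killed_flow b T) \<le> exp (- T / A) * rel_ent_unif G (killed_flow b 0)
      + A * (rho * (\<Sum>z\<in>G. b z))"
  proof (rule linear_differential_inequality[OF A_pos T])
    show "0 \<le> rho * (\<Sum>z\<in>G. b z)"
      using b rho_nonneg by (simp add: sum_nonneg less_imp_le)
    fix t assume t: "0 \<le> t" "t \<le> T"
    show "((\<lambda>t. rel_ent_unif G (killed_flow b t)) has_real_derivative D t) (at t)"
      unfolding D_def Let_def using G_ne pos[OF t(1)]
      by (intro rel_ent_unif_has_derivative killed_flow_has_derivative) auto
    have "D t \<le> - rel_ent_unif G (killed_flow b t) / A + rho * (\<Sum>y\<in>G. killed_flow b t y)"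
      unfolding D_def Let_def using pos[OF t(1)] by (rule entropy_production_le)
    also have "\<dots> \<le> - rel_ent_unif G (killed_flow b t) / A + rho * (\<Sum>z\<in>G. b z)"
      using b t rho_nonneg by (intro add_left_mono mult_left_mono killed_flow_mass_le) (auto simp: less_imp_le)
    finally show "D t \<le> - rel_ent_unif G (killed_flow b t) / A + rho * (\<Sum>z\<in>G. b z)" .
  qed
  then show ?thesis
    by (simp add: killed_flow_0 cong: rel_ent_unif_cong)
qed

text \<open>The positivity needed to differentiate \<open>x ln x\<close> is removed by perturbing the initial
  data by a constant \<open>e \<rightarrow> 0\<close>; the flow is affine in \<open>e\<close>.\<close>

lemma rel_ent_killed_flow_le:
  assumes b: "\<And>z. z \<in> G \<Longrightarrow> 0 \<le> b z" and T: "0 \<le> T"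
  shows "rel_ent_unif G (killed_flow b T) \<le> exp (- T / A) * rel_ent_unif G b + A * (rho * (\<Sum>z\<in>G. b z))"
proof -
  let ?b = "\<lambda>e z. b z + e"
  have "\<forall>\<^sub>F e in at_right 0. rel_ent_unif G (killed_flow (?b e) T)
      \<le> exp (- T / A) * rel_ent_unif G (?b e) + A * (rho * (\<Sum>z\<in>G. ?b e z))"
    unfolding eventually_at_right_field using b
    by (intro exI[of _ 1] conjI allI impI rel_ent_killed_flow_le_pos T) (auto intro: add_nonneg_pos)
  moreover have "((\<lambda>e. rel_ent_unif G (killed_flow (?b e) T)) \<longlongrightarrow> rel_ent_unif G (killed_flow b T))
      (at_right 0)"
    unfolding killed_flow_add_const
    by (rule tendsto_rel_ent_unif) (auto intro!: tendsto_eq_intros tendsto_ident_at)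
  moreover have "((\<lambda>e. exp (- T / A) * rel_ent_unif G (?b e) + A * (rho * (\<Sum>z\<in>G. ?b e z)))
      \<longlongrightarrow> exp (- T / A) * rel_ent_unif G b + A * (rho * (\<Sum>z\<in>G. b z))) (at_right 0)"
    by (auto intro!: tendsto_eq_intros tendsto_rel_ent_unif tendsto_ident_at)
  ultimately show ?thesis
    by (intro tendsto_le[OF trivial_limit_at_right_real]) auto
qed

lemma killed_flow_mass_ge:
  assumes T: "0 \<le> T" and \<eta>: "0 \<le> \<eta>" and exit: "exit_prob P G x s L \<le> \<eta>"
  shows "1 - (\<eta> + poi_gt T L) \<le> (\<Sum>y\<in>G. killed_flow (mpow P s x) T y)"
proof -
  define X where "X k = (\<Sum>z\<in>G. mpow P s x z * stay_in P G k z)" for k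
  have "X k \<le> (\<Sum>z\<in>G. mpow P s x z)" for k
    unfolding X_def by (intro sum_mono) (simp add: mpow_nonneg stay_in_le_1 mult_left_le)
  also have "\<dots> \<le> 1"
    using mpow_row_sum[of s x] sum_mono2[of UNIV G "mpow P s x"] by (simp add: mpow_nonneg)
  finally have "X k \<le> 1" for k .
  moreover have "0 \<le> X k" for k
    unfolding X_def by (intro sum_nonneg mult_nonneg_nonneg mpow_nonneg stay_in_nonneg)
  moreover have "1 - \<eta> \<le> X k" if "k \<le> L" for k
  proof -
    have "1 - \<eta> \<le> X L"
      using exit by (simp add: exit_prob_def X_def sum_UNIV_supported[of G] stay_in_outside)
    also have "\<dots> \<le> X k"
      unfolding X_def using that by (intro sum_mono mult_left_mono stay_in_antimono mpow_nonneg)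
    finally show ?thesis .
  qed
  ultimately have "(1 - poi_gt T L) * (1 - \<eta>) \<le> (\<Sum>y\<in>G. killed_flow (mpow P s x) T y)"
    using T by (simp add: killed_flow_mass_eq X_def poi_mixture_ge)
  moreover have "0 \<le> poi_gt T L * \<eta>"
    using \<eta> poi_gt_nonneg[OF T] by simp
  ultimately show ?thesis
    by (simp add: algebra_simps)
qed

lemma rel_ent_killed_flow_mpow_le:
  assumes T: "0 \<le> T"
  shows "rel_ent_unif G (killed_flow (mpow P s x) T) \<le> exp (- T / A) * ln (real (card \<Omega>)) + A * rho"
proof -
  have mass: "(\<Sum>z\<in>G. mpow P s x z) \<le> 1"
    using mpow_row_sum[of s x] sum_mono2[of UNIV G "mpow P s x"] by (simp add: mpow_nonneg)
  have "rel_ent_unif G (mpow P s x) \<le> ln (real (card G))"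
    using mass by (intro rel_ent_unif_le_ln_card) (auto simp: mpow_nonneg)
  also have "\<dots> \<le> ln (real (card \<Omega>))"
    using card_G_pos card_mono[OF finite G_subset] by (subst ln_le_cancel_iff) auto
  finally have "rel_ent_unif G (mpow P s x) \<le> ln (real (card \<Omega>))" .
  moreover have "A * (rho * (\<Sum>z\<in>G. mpow P s x z)) \<le> A * rho"
    using mass A_pos rho_nonneg by (simp add: mult_left_le)
  ultimately have "exp (- T / A) * rel_ent_unif G (mpow P s x) + A * (rho * (\<Sum>z\<in>G. mpow P s x z))
      \<le> exp (- T / A) * ln (real (card \<Omega>)) + A * rho"
    by (intro add_mono[OF mult_left_mono]) auto
  with rel_ent_killed_flow_le[OF _ T, of "mpow P s x"] show ?thesis
    by (simp add: mpow_nonneg)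
qed

lemma tv_heat_after_burn_in:
  assumes T: "0 \<le> T" and \<eta>: "0 \<le> \<eta>" and exit: "exit_prob P G x s L \<le> \<eta>"
  defines "R \<equiv> exp (- T / A) * ln (real (card \<Omega>)) + A * rho"
    and "piGc \<equiv> real (card (\<Omega> - G)) / real (card \<Omega>)"
  shows "tv_dist (\<lambda>y. \<Sum>z\<in>UNIV. mpow P s x z * heat P T z y) (cond_unif \<Omega>)
    \<le> 2 * (\<eta> + poi_gt T L) + sqrt (R / 2) + piGc"
proof -
  define w where "w = (\<lambda>y. \<Sum>z\<in>UNIV. mpow P s x z * heat P T z y)"
  define b e where "b = killed_flow (mpow P s x) T" and "e = \<eta> + poi_gt T L"
  define m where "m = (\<Sum>y\<in>G. b y)"
  have w: "\<And>y. 0 \<le> w y" "(\<Sum>y\<in>UNIV. w y) = 1"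
    using T by (simp_all add: w_def mpow_heat_nonneg mpow_heat_row_sum)
  have b: "\<And>y. y \<in> G \<Longrightarrow> 0 \<le> b y" "\<And>y. y \<in> G \<Longrightarrow> b y \<le> w y"
    using T by (simp_all add: b_def w_def killed_flow_nonneg killed_flow_le_heat mpow_nonneg)
  have R: "0 \<le> R"
    using ln_card_Omega_nonneg A_pos rho_nonneg by (simp add: R_def)
  have e: "0 \<le> e"
    using \<eta> poi_gt_nonneg[OF T] by (simp add: e_def)
  have "tv_dist w (cond_unif \<Omega>) \<le> 2 * e + sqrt (R / 2) + piGc"
  proof (cases "2 * e + sqrt (R / 2) < 1")
    case False
    have "tv_dist w (cond_unif \<Omega>) \<le> 1"
      using w G_ne G_subset by (intro tv_dist_le_1 cond_unif_nonneg cond_unif_sum) auto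
    moreover have "0 \<le> piGc"
      by (simp add: piGc_def)
    ultimately show ?thesis
      using False by linarith
  next
    case small: True
    have mass: "1 - e \<le> m"
      unfolding m_def b_def e_def using T \<eta> exit by (rule killed_flow_mass_ge)
    then have "0 < m"
      using small real_sqrt_ge_zero[of "R / 2"] R by linarith
    have "tv_dist w (cond_unif \<Omega>) \<le> (1 - m) + sqrt (rel_ent_unif G b / (2 * m)) + piGc"
      unfolding piGc_def by (rule tv_dist_cond_unif_le[OF w b m_def \<open>0 < m\<close> G_subset G_ne])
    also have "sqrt (rel_ent_unif G b / (2 * m)) \<le> sqrt (R / (2 * m))"
      using rel_ent_killed_flow_mpow_le[OF T] \<open>0 < m\<close>
      by (simp add: b_def R_def divide_right_mono)
    also have "(1 - m) + sqrt (R / (2 * m)) \<le> 2 * e + sqrt (R / 2)"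
      by (rule mass_defect_sqrt_le[OF R e mass small])
    finally show ?thesis by simp
  qed
  then show ?thesis
    by (simp add: w_def e_def)
qed

end

section \<open>Mixing time\<close>

context stochastic
begin

lemma tmix_cont_le:
  assumes \<Omega>: "\<Omega> \<noteq> {}" and ts: "0 \<le> tstar" and T: "0 \<le> T" and B: "0 \<le> B"
    and burn_in: "\<And>x s. x \<in> \<Omega> \<Longrightarrow> tstar \<le> real s \<Longrightarrow>
      tv_dist (\<lambda>y. \<Sum>z\<in>UNIV. mpow P s x z * heat P T z y) (cond_unif \<Omega>) \<le> B"
    and small: "B + poi_lt (2 * tstar) tstar \<le> 1/4"
  shows "tmix_cont P \<Omega> \<le> 2 * tstar + T"
proof -
  define a where "a = 2 * tstar"
  have a: "0 \<le> a" using ts by (simp add: a_def)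
  have "tv_dist (heat P (a + T) x) (cond_unif \<Omega>) \<le> 1/4" if x: "x \<in> \<Omega>" for x
  proof -
    define W where "W j y = (\<Sum>z\<in>UNIV. mpow P j x z * heat P T z y)" for j y
    have W: "\<And>j y. 0 \<le> W j y" "\<And>j. (\<Sum>y\<in>UNIV. W j y) = 1"
      using T by (simp_all add: W_def mpow_heat_nonneg mpow_heat_row_sum)
    have \<pi>: "\<And>y. 0 \<le> cond_unif \<Omega> y" "(\<Sum>y\<in>UNIV. cond_unif \<Omega> y) = 1"
      using \<Omega> by (simp_all add: cond_unif_nonneg cond_unif_sum)
    have "heat P (a + T) x = (\<lambda>y. \<Sum>j. poi_pmf a j * W j y)"
      using a T by (simp add: fun_eq_iff W_def heat_add_eq_poi_mixture)
    then have "tv_dist (heat P (a + T) x) (cond_unif \<Omega>) \<le> (\<Sum>j. poi_pmf a j * tv_dist (W j) (cond_unif \<Omega>))"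
      using tv_dist_poi_mixture_le[OF a W \<pi>] by simp
    also have "\<dots> \<le> B + poi_lt a tstar"
      using W \<pi> burn_in[OF x] B
      by (intro poi_mixture_le a tv_dist_nonneg tv_dist_le_1) (auto simp: W_def[abs_def])
    finally show ?thesis
      using small by (simp add: a_def)
  qed
  then have "a + T \<in> {t. 0 \<le> t \<and> (\<forall>x\<in>\<Omega>. tv_dist (heat P t x) (cond_unif \<Omega>) \<le> 1/4)}"
    using a T by simp
  then show ?thesis
    unfolding tmix_cont_def a_def by (rule cInf_lower) (auto intro: bdd_belowI[of _ 0])
qed

end

lemma stochastic_cr_kernel:
  fixes K :: "'n::finite \<Rightarrow> ('n \<Rightarrow> 'a::finite) \<Rightarrow> 'a \<Rightarrow> 'a \<Rightarrow> real"
  assumes "cr_data K"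
  shows "stochastic (cr_kernel K)"
proof
  have K: "\<And>i x a b. 0 \<le> K i x a b" "\<And>i x a. (\<Sum>b\<in>UNIV. K i x a b) = 1"
    using assms by (auto simp: cr_data_def)
  show "0 \<le> cr_kernel K x y" for x y
    unfolding cr_kernel_def by (intro mult_nonneg_nonneg sum_nonneg) (auto simp: K)
  show "(\<Sum>y\<in>UNIV. cr_kernel K x y) = 1" for x
  proof -
    define F where "F y i u = K i x (x i) u * (if y = x(i := u) then 1 else 0)" for y i u
    have "(\<Sum>y\<in>UNIV. \<Sum>i\<in>UNIV. \<Sum>u\<in>UNIV. F y i u) = (\<Sum>i\<in>UNIV. \<Sum>u\<in>UNIV. \<Sum>y\<in>UNIV. F y i u)"
      by (subst sum.swap) (intro sum.cong refl sum.swap)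
    also have "\<dots> = (\<Sum>i\<in>UNIV. \<Sum>u\<in>UNIV. K i x (x i) u)"
      by (simp add: F_def of_bool_def[symmetric])
    finally have "(\<Sum>y\<in>UNIV. \<Sum>i\<in>UNIV. \<Sum>u\<in>UNIV. F y i u) = real CARD('n)"
      by (simp add: K)
    then show ?thesis
      by (simp add: cr_kernel_def F_def flip: sum_distrib_left sum_divide_distrib)
  qed
qed

theorem theorem2p7:
  fixes K :: "'n::finite \<Rightarrow> ('n \<Rightarrow> 'a::finite) \<Rightarrow> 'a \<Rightarrow> 'a \<Rightarrow> real"
    and \<Omega> G :: "('n \<Rightarrow> 'a) set"
    and A tstar \<eta> :: real and L :: nat
  defines "P \<equiv> cr_kernel K"
  assumes K: "cr_data K"
    and rev: "\<forall>x y. P x y = P y x"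
    and \<Omega>ne: "\<Omega> \<noteq> {}"
    and inv: "\<forall>x\<in>\<Omega>. \<forall>y. y \<notin> \<Omega> \<longrightarrow> P x y = 0"
    and G: "G \<subseteq> \<Omega>" "G \<noteq> {}"
    and Apos: "A > 0"
    and LS: "\<forall>F :: ('n \<Rightarrow> 'a) \<Rightarrow> real. (\<forall>x. F x \<ge> 0) \<longrightarrow> (\<forall>x. x \<notin> G \<longrightarrow> F x = 0) \<longrightarrow>
               Ent_unif (\<lambda>x. (F x)^2) \<le> A * dirichlet_unif P F"
    and tstar: "tstar \<ge> 0" and L: "L \<ge> 1" and eta: "\<eta> \<ge> 0"
    and exit: "\<forall>x\<in>\<Omega>. \<forall>s::nat. real s \<ge> tstar \<longrightarrow> exit_prob P G x s L \<le> \<eta>"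
  shows "let tconf = 2 * A * ln (exp 1 + ln (real (card \<Omega>)));
             \<zeta> = poi_gt tconf L;
             piGc = real (card (\<Omega> - G)) / real (card \<Omega>);
             piG = real (card G) / real (card \<Omega>);
             R = exp (- tconf / A) * ln (real (card \<Omega>)) + A * piGc / piG;
             bound = 2 * (\<eta> + \<zeta>) + sqrt (R / 2) + piGc
         in (\<forall>x\<in>\<Omega>. \<forall>s::nat. real s \<ge> tstar \<longrightarrow>
               tv_dist (\<lambda>y. \<Sum>z\<in>UNIV. mpow P s x z * heat P tconf z y) (cond_unif \<Omega>) \<le> bound)
          \<and> (bound + poi_lt (2 * tstar) tstar \<le> 1/4 \<longrightarrow> tmix_cont P \<Omega> \<le> 2 * tstar + tconf)"
proof -
  interpret restricted_log_sobolev P \<Omega> G A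
    unfolding restricted_log_sobolev_def restricted_log_sobolev_axioms_def
    using stochastic_cr_kernel[OF K] rev inv G Apos LS by (simp add: P_def)
  define tconf where "tconf = 2 * A * ln (exp 1 + ln (real (card \<Omega>)))"
  define R where "R = exp (- tconf / A) * ln (real (card \<Omega>)) + A * rho"
  define bound where "bound = 2 * (\<eta> + poi_gt tconf L) + sqrt (R / 2) + real (card (\<Omega> - G)) / real (card \<Omega>)"
  have tconf: "0 \<le> tconf"
    using Apos ln_card_Omega_nonneg by (simp add: tconf_def add_increasing2)
  have "A * (real (card (\<Omega> - G)) / real (card \<Omega>)) / (real (card G) / real (card \<Omega>)) = A * rho"
    using ln_card_Omega_nonneg card_G_pos \<Omega>ne by (simp add: rho_def field_simps card_gt_0_iff)
  then have R_eq: "R = exp (- tconf / A) * ln (real (card \<Omega>))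
      + A * (real (card (\<Omega> - G)) / real (card \<Omega>)) / (real (card G) / real (card \<Omega>))"
    by (simp add: R_def)
  have burn_in: "tv_dist (\<lambda>y. \<Sum>z\<in>UNIV. mpow P s x z * heat P tconf z y) (cond_unif \<Omega>) \<le> bound"
    if "x \<in> \<Omega>" "tstar \<le> real s" for x s
    using tv_heat_after_burn_in[OF tconf eta] exit that by (simp add: bound_def R_def)
  moreover have "0 \<le> bound"
    using eta poi_gt_nonneg[OF tconf] ln_card_Omega_nonneg Apos rho_nonneg by (simp add: bound_def R_def)
  ultimately have "bound + poi_lt (2 * tstar) tstar \<le> 1/4 \<longrightarrow> tmix_cont P \<Omega> \<le> 2 * tstar + tconf"
    using tmix_cont_le[OF \<Omega>ne tstar tconf] by blast
  with burn_in show ?thesis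
    by (simp add: Let_def R_eq bound_def flip: tconf_def)
qed

end
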